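(* Let $(\Gamma,\lambda)$ be a tree plan with at least one infinity-node, and let $D=\deg P(\Gamma;x)$ (so $D\ge1$). Then $\mathcal{K}(\Gamma)$ is a $D$-dimensional asymptotic class of $\mathcal{L}_\Gamma$-structures, and for no positive integer $n<D$ is $\mathcal{K}(\Gamma)$ an $n$-dimensional asymptotic class.
   Context: Tree plans: a tree plan is a pair $(\Gamma,\lambda)$ where $\Gamma\subseteq\omega^{<\omega}$ is a finite set of finite sequences containing the empty sequence $\langle\rangle$ and closed under initial segments, and $\lambda:\Gamma\to\{1,\infty\}$ with $\lambda(\langle\rangle)=1$; nodes with $\lambda=\infty$ are infinity-nodes. For a non-empty set $X$ (and a fixed symbol $\star\notin X$), $\Gamma(X)$ is the set of finite sequences $\langle(i_0,t_0),\dots,(i_n,t_n)\rangle$ (including the empty one) such that $\langle i_0,\dots,i_n\rangle\in\Gamma$ and for each $k\le n$: $t_k=\star$ if $\lambda(\langle i_0,\dots,i_k\rangle)=1$, and $t_k\in X$ if $\lambda(\langle i_0,\dots,i_k\rangle)=\infty$. It is a tree under the initial-segment order, viewed as a structure in the language $\mathcal{L}_t$ with $\le$, root constant $\varepsilon$ (the empty sequence), meet $\sqcap$ (longest common initial segment) and $\mathtt{pred}$ (delete last entry; $\mathtt{pred}(\varepsilon)=\varepsilon$). The map $\pi_X:\Gamma(X)\to\Gamma$ sends $\langle(i_0,t_0),\dots,(i_n,t_n)\rangle$ to $\langle i_0,\dots,i_n\rangle$. The language $\mathcal{L}_\Gamma$ is $\mathcal{L}_t$ plus unary predicates $P_\sigma$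 ($\sigma\in\Gamma$) with $P_\sigma=\pi_X^{-1}(\sigma)$. $\Gamma(n)=\Gamma(\{1,\dots,n\})$, and $\mathcal{K}(\Gamma)$ is the class of finite $\mathcal{L}_\Gamma$-structures isomorphic to $\Gamma(n)$ for some $n\ge1$. Polynomial: with $\Gamma_\sigma=\{\tau:\sigma^\frown\tau\in\Gamma\}$, $\lambda_\sigma(\langle\rangle)=1$, $\lambda_\sigma(\tau)=\lambda(\sigma^\frown\tau)$ otherwise, define $P(\{\langle\rangle\};x)=1$ and $P(\Gamma;x)=1+\sum_{i<n}f_i(x)P(\Gamma_{\sigma_i};x)$ where $\sigma_0,\dots,\sigma_{n-1}$ are the immediate successors of $\langle\rangle$ and $f_i(x)=1$ if $\lambda(\sigma_i)=1$, $f_i(x)=x$ otherwise. (Equivalently $D$ is the maximum over $\sigma\in\Gamma$ of the number of infinity-nodes that are initial segments of $\sigma$.) Asymptotic classes: for a positive integer $N$, a class $\mathcal{K}$ of finite $\mathcal{L}$-structures is an $N$-dimensional asymptotic class if for every $\mathcal{L}$-formula $\varphi(x,\bar y)$ with $|\bar y|=m$ there is a finite set of triples $(d_i,\mu_i,\theta_i(\bar y))$, $i<k$, with $d_i\in\{0,\frac1N,\dots,\frac{N-1}N,1\}$, $\mu_i\in[0,\infty)$ and $\mu_i>0$ unless $d_i=0$, and $\theta_i$ $\mathcal{L}$-formulas, such that: (i) every $A\in\mathcal{K}$ satisfies $\forall\bar y\bigvee_{i<k}\theta_i(\bar y)$ and $\forall\bar y\,(\theta_i(\bar y)\to\neg\theta_j(\bar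 y))$ for $i\ne j$; (ii) for each $i<k$ and each $\epsilon>0$ there is $M$ such that for all $A\in\mathcal{K}$ with $|A|\ge M$ and all $\bar b\in A^m$ with $A\models\theta_i(\bar b)$, $\big||\varphi(A,\bar b)|-\mu_i|A|^{d_i}\big|\le\epsilon|A|^{d_i}$. *)

theory Defs
  imports Complex_Main "HOL-Computational_Algebra.Polynomial"
begin

datatype label = One | Infty

text \<open>A tree plan: a finite set of finite sequences of naturals containing the empty
sequence and closed under initial segments, with a labelling into {1, infinity}
(values outside the tree are irrelevant), the root labelled 1.\<close>

definition tree_plan :: "nat list set \<Rightarrow> (nat list \<Rightarrow> label) \<Rightarrow> bool" where
  "tree_plan G lam \<longleftrightarrow> finite G \<and> [] \<in> G \<and>
     (\<forall>s\<in>G. \<forall>k. take k s \<in> G) \<and> lam [] = One"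

definition sub_plan :: "nat list set \<Rightarrow> nat list \<Rightarrow> nat list set" where
  "sub_plan G s = {t. s @ t \<in> G}"

definition sub_lab :: "(nat list \<Rightarrow> label) \<Rightarrow> nat list \<Rightarrow> nat list \<Rightarrow> label" where
  "sub_lab lam s t = (if t = [] then One else lam (s @ t))"

definition lab_factor :: "label \<Rightarrow> int poly" where
  "lab_factor l = (if l = One then 1 else [:0, 1:])"

text \<open>The recursion P(Gamma;x) = 1 + sum_i f_i(x) P(Gamma_{sigma_i};x), run with a fuel
parameter (any fuel at least the height of the tree gives the polynomial; once the tree is
just the root the sum is empty and the value is 1).\<close>

fun tpoly_aux :: "nat \<Rightarrow> nat list set \<Rightarrow> (nat list \<Rightarrow> label) \<Rightarrow> int poly" where
  "tpoly_aux 0 G lam = 1"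
| "tpoly_aux (Suc k) G lam =
     1 + (\<Sum>i\<in>{i. [i] \<in> G}. lab_factor (lam [i]) * tpoly_aux k (sub_plan G [i]) (sub_lab lam [i]))"

definition tpoly :: "nat list set \<Rightarrow> (nat list \<Rightarrow> label) \<Rightarrow> int poly" where
  "tpoly G lam = tpoly_aux (Max (length ` G)) G lam"

record 'a tstruct =
  carrier :: "'a set"
  le :: "'a \<Rightarrow> 'a \<Rightarrow> bool"
  root :: 'a
  meet :: "'a \<Rightarrow> 'a \<Rightarrow> 'a"
  pred :: "'a \<Rightarrow> 'a"
  Pr :: "nat list \<Rightarrow> 'a \<Rightarrow> bool"

fun lcp :: "'b list \<Rightarrow> 'b list \<Rightarrow> 'b list" where
  "lcp (x # xs) (y # ys) = (if x = y then x # lcp xs ys else [])"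
| "lcp _ _ = []"

text \<open>Gamma(X), with None playing the role of the symbol star.\<close>

definition Gamma_set :: "nat list set \<Rightarrow> (nat list \<Rightarrow> label) \<Rightarrow> nat set \<Rightarrow> (nat \<times> nat option) list set" where
  "Gamma_set G lam X = {s. map fst s \<in> G \<and>
     (\<forall>k < length s. (if lam (map fst (take (Suc k) s)) = Infty
                        then snd (s ! k) \<in> Some ` X else snd (s ! k) = None))}"

definition Gamma_struct :: "nat list set \<Rightarrow> (nat list \<Rightarrow> label) \<Rightarrow> nat set \<Rightarrow> (nat \<times> nat option) list tstruct" where
  "Gamma_struct G lam X = \<lparr> carrier = Gamma_set G lam X,
     le = (\<lambda>s t. \<exists>u. t = s @ u),
     root = [],
     meet = lcp,
     pred = butlast,
     Pr = (\<lambda>\<sigma> s. map fst s = \<sigma>) \<rparr>"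

text \<open>Isomorphism of L_Gamma-structures (only the predicates P_sigma with sigma in Gamma
belong to the language).\<close>

definition iso_struct :: "nat list set \<Rightarrow> 'a tstruct \<Rightarrow> 'b tstruct \<Rightarrow> bool" where
  "iso_struct G A B \<longleftrightarrow>
     root A \<in> carrier A \<and>
     (\<forall>a\<in>carrier A. pred A a \<in> carrier A) \<and>
     (\<forall>a\<in>carrier A. \<forall>b\<in>carrier A. meet A a b \<in> carrier A) \<and>
     (\<exists>h. bij_betw h (carrier A) (carrier B) \<and>
        h (root A) = root B \<and>
        (\<forall>a\<in>carrier A. h (pred A a) = pred B (h a)) \<and>
        (\<forall>a\<in>carrier A. \<forall>b\<in>carrier A. h (meet A a b) = meet B (h a) (h b)) \<and>
        (\<forall>a\<in>carrier A. \<forall>b\<in>carrier A. le A a b \<longleftrightarrow> le B (h a) (h b)) \<and>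
        (\<forall>\<sigma>\<in>G. \<forall>a\<in>carrier A. Pr A \<sigma> a \<longleftrightarrow> Pr B \<sigma> (h a)))"

text \<open>K(Gamma): finite L_Gamma-structures isomorphic to some Gamma(n), n >= 1.
The universe type is fixed to the (infinite) type of the standard models, which contains
an isomorphic copy of every finite structure.\<close>

definition K_class :: "nat list set \<Rightarrow> (nat list \<Rightarrow> label) \<Rightarrow> (nat \<times> nat option) list tstruct set" where
  "K_class G lam = {A. finite (carrier A) \<and>
     (\<exists>n\<ge>1. iso_struct G A (Gamma_struct G lam {1..n}))}"

datatype tm = Var nat | Root | Meet tm tm | PredT tm

datatype fm = FFalse | FEq tm tm | FLe tm tm | FP "nat list" tm
  | FNot fm | FAnd fm fm | FOr fm fm | FEx nat fm | FAll nat fm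

fun fv_tm :: "tm \<Rightarrow> nat set" where
  "fv_tm (Var v) = {v}"
| "fv_tm Root = {}"
| "fv_tm (Meet s t) = fv_tm s \<union> fv_tm t"
| "fv_tm (PredT t) = fv_tm t"

fun fv :: "fm \<Rightarrow> nat set" where
  "fv FFalse = {}"
| "fv (FEq s t) = fv_tm s \<union> fv_tm t"
| "fv (FLe s t) = fv_tm s \<union> fv_tm t"
| "fv (FP \<sigma> t) = fv_tm t"
| "fv (FNot p) = fv p"
| "fv (FAnd p q) = fv p \<union> fv q"
| "fv (FOr p q) = fv p \<union> fv q"
| "fv (FEx v p) = fv p - {v}"
| "fv (FAll v p) = fv p - {v}"

fun in_lang :: "nat list set \<Rightarrow> fm \<Rightarrow> bool" where
  "in_lang G (FP \<sigma> t) = (\<sigma> \<in> G)"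
| "in_lang G (FNot p) = in_lang G p"
| "in_lang G (FAnd p q) = (in_lang G p \<and> in_lang G q)"
| "in_lang G (FOr p q) = (in_lang G p \<and> in_lang G q)"
| "in_lang G (FEx v p) = in_lang G p"
| "in_lang G (FAll v p) = in_lang G p"
| "in_lang G _ = True"

fun eval_tm :: "'a tstruct \<Rightarrow> (nat \<Rightarrow> 'a) \<Rightarrow> tm \<Rightarrow> 'a" where
  "eval_tm A e (Var v) = e v"
| "eval_tm A e Root = root A"
| "eval_tm A e (Meet s t) = meet A (eval_tm A e s) (eval_tm A e t)"
| "eval_tm A e (PredT t) = pred A (eval_tm A e t)"

fun sat :: "'a tstruct \<Rightarrow> (nat \<Rightarrow> 'a) \<Rightarrow> fm \<Rightarrow> bool" where
  "sat A e FFalse = False"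
| "sat A e (FEq s t) = (eval_tm A e s = eval_tm A e t)"
| "sat A e (FLe s t) = le A (eval_tm A e s) (eval_tm A e t)"
| "sat A e (FP \<sigma> t) = Pr A \<sigma> (eval_tm A e t)"
| "sat A e (FNot p) = (\<not> sat A e p)"
| "sat A e (FAnd p q) = (sat A e p \<and> sat A e q)"
| "sat A e (FOr p q) = (sat A e p \<or> sat A e q)"
| "sat A e (FEx v p) = (\<exists>a\<in>carrier A. sat A (e(v := a)) p)"
| "sat A e (FAll v p) = (\<forall>a\<in>carrier A. sat A (e(v := a)) p)"

text \<open>Variable 0 is x, variables 1..m are y_1..y_m (given as a list b of length m).\<close>

definition env :: "'a tstruct \<Rightarrow> 'a \<Rightarrow> 'a list \<Rightarrow> nat \<Rightarrow> 'a" where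
  "env A a b = (\<lambda>k. if k = 0 then a else if k \<le> length b then b ! (k - 1) else root A)"

definition tuples :: "'a tstruct \<Rightarrow> nat \<Rightarrow> 'a list set" where
  "tuples A m = {b. length b = m \<and> set b \<subseteq> carrier A}"

definition def_set :: "'a tstruct \<Rightarrow> fm \<Rightarrow> 'a list \<Rightarrow> 'a set" where
  "def_set A \<phi> b = {a \<in> carrier A. sat A (env A a b) \<phi>}"

definition holds_y :: "'a tstruct \<Rightarrow> fm \<Rightarrow> 'a list \<Rightarrow> bool" where
  "holds_y A \<theta> b = sat A (env A (root A) b) \<theta>"

definition asymptotic_class :: "(fm \<Rightarrow> bool) \<Rightarrow> 'a tstruct set \<Rightarrow> nat \<Rightarrow> bool" where
  "asymptotic_class L K N \<longleftrightarrow> N > 0 \<and>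
    (\<forall>\<phi> m. L \<phi> \<and> fv \<phi> \<subseteq> {..m} \<longrightarrow>
      (\<exists>T :: (real \<times> real \<times> fm) list.
         (\<forall>(d, \<mu>, \<theta>) \<in> set T.
             (\<exists>j\<le>N. d = real j / real N) \<and> \<mu> \<ge> 0 \<and> (d \<noteq> 0 \<longrightarrow> \<mu> > 0) \<and>
             L \<theta> \<and> fv \<theta> \<subseteq> {1..m}) \<and>
         (\<forall>A\<in>K. \<forall>b\<in>tuples A m.
             (\<exists>i < length T. holds_y A (snd (snd (T ! i))) b) \<and>
             (\<forall>i < length T. \<forall>j < length T. i \<noteq> j \<longrightarrow>
                 \<not> (holds_y A (snd (snd (T ! i))) b \<and> holds_y A (snd (snd (T ! j))) b))) \<and>
         (\<forall>i < length T. \<forall>\<epsilon>::real. \<epsilon> > 0 \<longrightarrow>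
            (\<exists>M::nat. \<forall>A\<in>K. card (carrier A) \<ge> M \<longrightarrow>
               (\<forall>b\<in>tuples A m. holds_y A (snd (snd (T ! i))) b \<longrightarrow>
                  \<bar>real (card (def_set A \<phi> b)) - fst (snd (T ! i)) * real (card (carrier A)) powr fst (T ! i)\<bar>
                    \<le> \<epsilon> * real (card (carrier A)) powr fst (T ! i))))))"

end

theory Submission
  imports Defs "HOL-Library.Sublist"
begin

(* Fix parameters b_1, ..., b_m in Gamma(n) and let b_0 be the root. A node x that is an initial
   segment of some b_j is pinned down by the least such j and its shape. Any other node is
   determined, up to automorphisms fixing the parameters (composites of swaps of sibling
   subtrees), by its shape sigma, the least j for which the meet of x and b_j is longest, and the
   shape tau of that meet. These finitely many cells are quantifier-free definable from b, so every
   formula phi(x, b) defines a union of cells, and which cells it meets is expressed by a formula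
   in b. A cell of type (sigma, j, tau) has between n^k - (m+1) n^(k-1) and n^k elements, where k
   counts the infinity-nodes on the path to sigma strictly above tau. Hence |phi(Gamma(n), b)| =
   c n^K + O(n^(K-1)), while |Gamma(n)| = P(Gamma; n) ~ L n^D; this gives dimension K/D and measure
   c/L^(K/D). Conversely, if sigma has exactly one infinity-node on its path then P_sigma(x) has
   exactly n solutions, roughly |Gamma(n)|^(1/D), and no dimension j/N with N < D fits this. *)

section \<open>Prefixes and longest common prefixes\<close>

lemma prefix_lcp_iff: "prefix w (lcp s t) \<longleftrightarrow> prefix w s \<and> prefix w t"
proof (induction s t arbitrary: w rule: lcp.induct)
  case (1 x xs y ys)
  then show ?case by (cases w) auto
qed auto

lemma lcp_prefix1: "prefix (lcp s t) s" and lcp_prefix2: "prefix (lcp s t) t"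
  using prefix_lcp_iff[of "lcp s t" s t] by auto

lemma lcp_eq_left: "prefix x y \<Longrightarrow> lcp x y = x"
  by (meson lcp_prefix1 prefix_lcp_iff prefix_order.antisym prefix_order.refl)

lemma eq_if_same_prefixes: "(\<And>w. prefix w a \<longleftrightarrow> prefix w b) \<Longrightarrow> a = b"
  by (meson prefix_order.antisym prefix_order.refl)

lemma prefix_same_length_eq: "prefix a c \<Longrightarrow> prefix b c \<Longrightarrow> length a = length b \<Longrightarrow> a = b"
  by (metis prefix_length_prefix prefix_order.antisym order_refl)

lemma prefix_butlast_if_shorter: "prefix u x \<Longrightarrow> length u < length x \<Longrightarrow> prefix u (butlast x)"
  by (metis prefix_order.eq_iff prefix_length_le prefix_snoc snoc_eq_iff_butlast length_greater_0_conv
      less_le_not_le list.size(3) not_less_zero)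

lemma prefix_take_if_shorter: "prefix u x \<Longrightarrow> length u \<le> k \<Longrightarrow> prefix u (take k x)"
  by (auto simp: prefix_def)

lemma prefix_take_Suc_if_not_prefix:
  assumes "prefix a x" "prefix u x" "\<not> prefix a u"
  shows "prefix (take (Suc (length u)) x) a"
proof -
  have "length u < length a" using assms by (metis not_le prefix_length_prefix)
  moreover have "length (take (Suc (length u)) x) \<le> Suc (length u)" by simp
  ultimately show ?thesis using assms(1) take_is_prefix prefix_length_prefix
    by (metis Suc_leI order_trans)
qed

lemma lcp_eq_if_diverges:
  assumes "prefix u x" "prefix u y" "length u < length x" "\<not> prefix (take (Suc (length u)) x) y"
  shows "lcp x y = u"
proof -
  have u: "prefix u (lcp x y)" using assms prefix_lcp_iff by blast
  have "\<not> prefix (take (Suc (length u)) x) (lcp x y)"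
    using assms(4) lcp_prefix2 prefix_order.trans by blast
  then have "prefix (lcp x y) u"
    using prefix_take_Suc_if_not_prefix[OF lcp_prefix1 assms(1)] by blast
  then show ?thesis using u by (rule prefix_order.antisym)
qed

lemma lcp_eq_lcp_if_between: "prefix u x \<Longrightarrow> prefix (lcp x y) u \<Longrightarrow> lcp x y = lcp u y"
  by (rule eq_if_same_prefixes) (metis prefix_lcp_iff prefix_order.trans)

section \<open>The trees \<open>\<Gamma>(X)\<close>\<close>

definition admissible :: "(nat list \<Rightarrow> label) \<Rightarrow> nat set \<Rightarrow> nat list \<Rightarrow> nat option \<Rightarrow> bool" where
  "admissible lam X \<sigma> t \<longleftrightarrow> (if lam \<sigma> = Infty then t \<in> Some ` X else t = None)"

lemma mem_Gamma_set_iff: "s \<in> Gamma_set G lam X \<longleftrightarrow> map fst s \<in> G \<and>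
   (\<forall>k < length s. admissible lam X (map fst (take (Suc k) s)) (snd (s ! k)))"
  unfolding Gamma_set_def admissible_def by auto

lemma tree_plan_take: "tree_plan G lam \<Longrightarrow> s \<in> G \<Longrightarrow> take k s \<in> G"
  unfolding tree_plan_def by auto

lemma Gamma_set_take: "tree_plan G lam \<Longrightarrow> s \<in> Gamma_set G lam X \<Longrightarrow> take k s \<in> Gamma_set G lam X"
  unfolding mem_Gamma_set_iff by (auto simp: take_map[symmetric] tree_plan_take min_def)

lemma Gamma_set_prefix:
  "tree_plan G lam \<Longrightarrow> s \<in> Gamma_set G lam X \<Longrightarrow> prefix w s \<Longrightarrow> w \<in> Gamma_set G lam X"
  by (metis Gamma_set_take append_eq_conv_conj prefix_def)

lemma Gamma_set_Nil: "tree_plan G lam \<Longrightarrow> [] \<in> Gamma_set G lam X"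
  unfolding mem_Gamma_set_iff tree_plan_def by auto

lemma Gamma_set_butlast: "tree_plan G lam \<Longrightarrow> s \<in> Gamma_set G lam X \<Longrightarrow> butlast s \<in> Gamma_set G lam X"
  using Gamma_set_prefix prefixeq_butlast by blast

lemma Gamma_set_lcp: "tree_plan G lam \<Longrightarrow> s \<in> Gamma_set G lam X \<Longrightarrow> lcp s t \<in> Gamma_set G lam X"
  using Gamma_set_prefix lcp_prefix1 by blast

lemma Gamma_set_snoc:
  "u \<in> Gamma_set G lam X \<Longrightarrow> map fst u @ [i] \<in> G \<Longrightarrow> admissible lam X (map fst u @ [i]) t \<Longrightarrow>
   u @ [(i, t)] \<in> Gamma_set G lam X"
  unfolding mem_Gamma_set_iff by (auto simp: nth_append less_Suc_eq take_Suc_conv_app_nth)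

lemma Gamma_set_replace_prefix:
  assumes "p @ w \<in> Gamma_set G lam X" "q \<in> Gamma_set G lam X" "map fst q = map fst p"
  shows "q @ w \<in> Gamma_set G lam X"
proof -
  have "length q = length p" using assms(3) by (metis length_map)
  then show ?thesis using assms unfolding mem_Gamma_set_iff by (auto simp: nth_append)
qed

lemma Gamma_struct_simps:
  "carrier (Gamma_struct G lam X) = Gamma_set G lam X" "root (Gamma_struct G lam X) = []"
  "meet (Gamma_struct G lam X) = lcp" "pred (Gamma_struct G lam X) = butlast"
  "le (Gamma_struct G lam X) = prefix" "Pr (Gamma_struct G lam X) = (\<lambda>\<sigma> s. map fst s = \<sigma>)"
  by (auto simp: Gamma_struct_def prefix_def fun_eq_iff)

section \<open>Isomorphisms preserve satisfaction\<close>

definition closed_struct :: "'a tstruct \<Rightarrow> bool" where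
  "closed_struct A \<longleftrightarrow> root A \<in> carrier A \<and>
     (\<forall>a\<in>carrier A. pred A a \<in> carrier A) \<and>
     (\<forall>a\<in>carrier A. \<forall>b\<in>carrier A. meet A a b \<in> carrier A)"

definition iso_map :: "nat list set \<Rightarrow> 'a tstruct \<Rightarrow> 'b tstruct \<Rightarrow> ('a \<Rightarrow> 'b) \<Rightarrow> bool" where
  "iso_map G A B h \<longleftrightarrow> bij_betw h (carrier A) (carrier B) \<and>
        h (root A) = root B \<and>
        (\<forall>a\<in>carrier A. h (pred A a) = pred B (h a)) \<and>
        (\<forall>a\<in>carrier A. \<forall>b\<in>carrier A. h (meet A a b) = meet B (h a) (h b)) \<and>
        (\<forall>a\<in>carrier A. \<forall>b\<in>carrier A. le A a b \<longleftrightarrow> le B (h a) (h b)) \<and>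
        (\<forall>\<sigma>\<in>G. \<forall>a\<in>carrier A. Pr A \<sigma> a \<longleftrightarrow> Pr B \<sigma> (h a))"

lemma iso_struct_iff: "iso_struct G A B \<longleftrightarrow> closed_struct A \<and> (\<exists>h. iso_map G A B h)"
  unfolding iso_struct_def closed_struct_def iso_map_def by blast

lemma iso_map_id: "iso_map G A A id"
  unfolding iso_map_def by auto

lemma iso_map_comp:
  assumes f: "iso_map G A B f" and g: "iso_map G B C g" and A: "closed_struct A"
  shows "iso_map G A C (g \<circ> f)"
proof -
  have "\<forall>a\<in>carrier A. f a \<in> carrier B" using f unfolding iso_map_def by (meson bij_betw_apply)
  then show ?thesis using f g A unfolding iso_map_def closed_struct_def
    by (auto intro: bij_betw_trans)
qed

lemma eval_tm_iso:
  assumes "closed_struct A" "iso_map G A B h" "\<forall>v. e v \<in> carrier A"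
  shows "eval_tm A e t \<in> carrier A \<and> h (eval_tm A e t) = eval_tm B (h \<circ> e) t"
  using assms unfolding closed_struct_def iso_map_def by (induction t) auto

lemma sat_iso:
  assumes A: "closed_struct A" and h: "iso_map G A B h"
  shows "in_lang G \<phi> \<Longrightarrow> \<forall>v. e v \<in> carrier A \<Longrightarrow> sat A e \<phi> \<longleftrightarrow> sat B (h \<circ> e) \<phi>"
proof (induction \<phi> arbitrary: e)
  case (FEq s t)
  have "inj_on h (carrier A)" using h unfolding iso_map_def bij_betw_def by auto
  then show ?case using eval_tm_iso[OF A h FEq(2), of s] eval_tm_iso[OF A h FEq(2), of t]
    by (metis inj_on_eq_iff sat.simps(2))
next
  case (FEx v p)
  have bij: "bij_betw h (carrier A) (carrier B)" using h unfolding iso_map_def by auto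
  have "sat A e (FEx v p) \<longleftrightarrow> (\<exists>a\<in>carrier A. sat B (h \<circ> e(v := a)) p)"
    using FEx by (auto simp: comp_def)
  also have "\<dots> \<longleftrightarrow> (\<exists>a\<in>carrier A. sat B ((h \<circ> e)(v := h a)) p)"
    by (simp add: fun_upd_comp)
  also have "\<dots> \<longleftrightarrow> (\<exists>b\<in>carrier B. sat B ((h \<circ> e)(v := b)) p)"
    using bij by (metis bij_betw_apply bij_betw_inv_into_right bij_betw_inv_into bij_betw_def)
  finally show ?case by (simp add: comp_def)
next
  case (FAll v p)
  have bij: "bij_betw h (carrier A) (carrier B)" using h unfolding iso_map_def by auto
  have "sat A e (FAll v p) \<longleftrightarrow> (\<forall>a\<in>carrier A. sat B (h \<circ> e(v := a)) p)"
    using FAll by (auto simp: comp_def)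
  also have "\<dots> \<longleftrightarrow> (\<forall>a\<in>carrier A. sat B ((h \<circ> e)(v := h a)) p)"
    by (simp add: fun_upd_comp)
  also have "\<dots> \<longleftrightarrow> (\<forall>b\<in>carrier B. sat B ((h \<circ> e)(v := b)) p)"
    using bij by (metis bij_betw_apply bij_betw_inv_into_right bij_betw_inv_into bij_betw_def)
  finally show ?case by (simp add: comp_def)
next
  case (FLe s t)
  then show ?case using eval_tm_iso[OF A h, of e] h unfolding iso_map_def by (auto simp: comp_def)
next
  case (FP \<sigma> t)
  then show ?case using eval_tm_iso[OF A h, of e] h unfolding iso_map_def by (auto simp: comp_def)
qed auto

lemma comp_env: "h (root A) = root B \<Longrightarrow> h \<circ> env A a b = env B (h a) (map h b)"
  by (auto simp: env_def fun_eq_iff)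

lemma env_in_carrier:
  "root A \<in> carrier A \<Longrightarrow> a \<in> carrier A \<Longrightarrow> set b \<subseteq> carrier A \<Longrightarrow> env A a b v \<in> carrier A"
  by (auto simp: env_def)

locale struct_iso =
  fixes G :: "nat list set" and A :: "'a tstruct" and B :: "'b tstruct" and h
  assumes closed: "closed_struct A" and iso: "iso_map G A B h"
begin

lemma bij: "bij_betw h (carrier A) (carrier B)"
  using iso unfolding iso_map_def by auto

lemma sat_env_iff:
  assumes "in_lang G \<phi>" "a \<in> carrier A" "b \<in> tuples A m"
  shows "sat A (env A a b) \<phi> \<longleftrightarrow> sat B (env B (h a) (map h b)) \<phi>"
proof -
  have "root A \<in> carrier A" using closed unfolding closed_struct_def by auto
  then have "sat A (env A a b) \<phi> \<longleftrightarrow> sat B (h \<circ> env A a b) \<phi>"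
    using sat_iso[OF closed iso assms(1)] env_in_carrier[of A a b] assms(2,3)
    unfolding tuples_def by simp
  moreover have "h (root A) = root B" using iso unfolding iso_map_def by auto
  ultimately show ?thesis by (simp add: comp_env)
qed

lemma tuples_map: "b \<in> tuples A m \<Longrightarrow> map h b \<in> tuples B m"
  unfolding tuples_def using bij by (auto simp: bij_betw_def)

lemma holds_y_iff: "b \<in> tuples A m \<Longrightarrow> in_lang G \<theta> \<Longrightarrow> holds_y A \<theta> b \<longleftrightarrow> holds_y B \<theta> (map h b)"
  unfolding holds_y_def
  using sat_env_iff[of \<theta> "root A" b m] closed iso unfolding closed_struct_def iso_map_def by simp

lemma card_def_set:
  assumes "b \<in> tuples A m" "in_lang G \<phi>"
  shows "card (def_set A \<phi> b) = card (def_set B \<phi> (map h b))"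
proof -
  have "def_set B \<phi> (map h b) = h ` def_set A \<phi> b"
  proof (intro equalityI subsetI)
    fix y assume y: "y \<in> def_set B \<phi> (map h b)"
    then obtain a where "a \<in> carrier A" "y = h a" using bij unfolding def_set_def bij_betw_def by auto
    then show "y \<in> h ` def_set A \<phi> b" using y sat_env_iff[OF assms(2) _ assms(1)] by (auto simp: def_set_def)
  next
    fix y assume "y \<in> h ` def_set A \<phi> b"
    then show "y \<in> def_set B \<phi> (map h b)"
      using bij sat_env_iff[OF assms(2) _ assms(1)] by (auto simp: def_set_def bij_betw_def)
  qed
  moreover have "inj_on h (def_set A \<phi> b)"
    using bij unfolding bij_betw_def def_set_def by (auto intro: inj_on_subset)
  ultimately show ?thesis by (simp add: card_image)
qed

lemma card_carrier: "card (carrier A) = card (carrier B)"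
  using bij by (rule bij_betw_same_card)

end

section \<open>Automorphisms of \<open>\<Gamma>(X)\<close> swapping sibling subtrees\<close>

definition swap_subtrees :: "'a list \<Rightarrow> 'a list \<Rightarrow> 'a list \<Rightarrow> 'a list" where
  "swap_subtrees p q z = (if prefix p z then q @ drop (length p) z
                          else if prefix q z then p @ drop (length q) z else z)"

lemma swap_subtrees_same: "swap_subtrees p p z = z"
  unfolding swap_subtrees_def by (auto elim!: prefixE)

lemma map_fst_swap_subtrees:
  assumes "map fst p = map fst q"
  shows "map fst (swap_subtrees p q z) = map fst z"
proof -
  have "length p = length q" using assms by (metis length_map)
  then show ?thesis using assms unfolding swap_subtrees_def by (auto simp: prefix_def)
qed

lemma prefix_append_iff_prefix_butlast:
  assumes "p \<noteq> []" "\<not> prefix p a"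
  shows "prefix a (p @ w) \<longleftrightarrow> prefix a (butlast p)"
proof -
  have p: "p = butlast p @ [last p]" using assms(1) by simp
  show ?thesis
  proof
    assume "prefix a (p @ w)"
    then have "prefix a p" using assms(2) by (auto simp: prefix_append)
    then show "prefix a (butlast p)" using assms(2) p by (metis prefix_order.refl prefix_snoc)
  qed (metis p prefix_prefix prefix_order.trans prefixeq_butlast)
qed

locale siblings =
  fixes p q :: "'a list"
  assumes length_eq: "length p = length q" and butlast_eq: "butlast p = butlast q"
    and not_Nil: "p \<noteq> []"
begin

lemma q_not_Nil: "q \<noteq> []"
  using not_Nil length_eq by auto

lemma not_prefix_both: "p \<noteq> q \<Longrightarrow> prefix p z \<Longrightarrow> prefix q z \<Longrightarrow> False"
  using length_eq prefix_same_length_eq by blast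

lemma length_swap: "length (swap_subtrees p q z) = length z"
  unfolding swap_subtrees_def using length_eq by (auto dest: prefix_length_le)

lemma swap_swap: "swap_subtrees p q (swap_subtrees p q z) = z"
  using length_eq not_prefix_both unfolding swap_subtrees_def by (cases "p = q") (auto simp: prefix_def)

lemma swap_mono:
  assumes ab: "prefix a b"
  shows "prefix (swap_subtrees p q a) (swap_subtrees p q b)"
proof (cases "p = q")
  case True
  then show ?thesis using ab by (simp add: swap_subtrees_same)
next
  case False
  consider "prefix p a" | "prefix q a" | "\<not> prefix p a" "\<not> prefix q a" by blast
  then show ?thesis
  proof cases
    case 1
    then obtain a' c where "a = p @ a'" "b = p @ a' @ c" using ab by (auto simp: prefix_def)
    then show ?thesis by (simp add: swap_subtrees_def)
  next
    case 2
    then obtain a' c where ac: "a = q @ a'" "b = q @ a' @ c" using ab by (auto simp: prefix_def)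
    then have "\<not> prefix p a" "\<not> prefix p b" using not_prefix_both[OF False] by (metis prefixI)+
    then show ?thesis using ac by (simp add: swap_subtrees_def)
  next
    case 3
    have sa: "swap_subtrees p q a = a" using 3 by (simp add: swap_subtrees_def)
    have pa: "prefix a (butlast p)" if "b = r @ w" "r = p \<or> r = q" for r w
      using ab that 3 prefix_append_iff_prefix_butlast[OF not_Nil] prefix_append_iff_prefix_butlast[OF q_not_Nil]
      by (auto simp: butlast_eq)
    show ?thesis
    proof (cases "prefix p b")
      case True
      then obtain w where b: "b = p @ w" by (auto simp: prefix_def)
      then have "prefix a (q @ w)" using pa[OF b] q_not_Nil by (metis butlast_eq prefix_order.trans prefixeq_butlast prefix_prefix)
      then show ?thesis using sa b by (simp add: swap_subtrees_def)
    next
      case npb: False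
      show ?thesis
      proof (cases "prefix q b")
        case True
        then obtain w where b: "b = q @ w" by (auto simp: prefix_def)
        then have "prefix a (p @ w)" using pa[OF b] by (metis prefix_order.trans prefixeq_butlast prefix_prefix)
        then show ?thesis using sa b npb length_eq by (simp add: swap_subtrees_def)
      qed (use sa npb ab in \<open>simp add: swap_subtrees_def\<close>)
    qed
  qed
qed

lemma prefix_swap_iff: "prefix (swap_subtrees p q a) (swap_subtrees p q b) \<longleftrightarrow> prefix a b"
  using swap_mono swap_mono[of "swap_subtrees p q a" "swap_subtrees p q b"] swap_swap by metis

lemma swap_lcp: "swap_subtrees p q (lcp s t) = lcp (swap_subtrees p q s) (swap_subtrees p q t)"
proof (rule eq_if_same_prefixes)
  fix w
  have "prefix w (swap_subtrees p q (lcp s t)) \<longleftrightarrow> prefix (swap_subtrees p q w) (lcp s t)"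
    using prefix_swap_iff[of "swap_subtrees p q w" "lcp s t"] swap_swap by simp
  also have "\<dots> \<longleftrightarrow> prefix w (swap_subtrees p q s) \<and> prefix w (swap_subtrees p q t)"
    using prefix_swap_iff[of "swap_subtrees p q w"] swap_swap by (simp add: prefix_lcp_iff)
  finally show "prefix w (swap_subtrees p q (lcp s t)) \<longleftrightarrow>
      prefix w (lcp (swap_subtrees p q s) (swap_subtrees p q t))"
    by (simp add: prefix_lcp_iff)
qed

lemma swap_Nil: "swap_subtrees p q [] = []"
  using not_Nil q_not_Nil by (auto simp: swap_subtrees_def)

lemma swap_butlast: "swap_subtrees p q (butlast z) = butlast (swap_subtrees p q z)"
proof (rule prefix_same_length_eq)
  show "prefix (swap_subtrees p q (butlast z)) (swap_subtrees p q z)"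
    using prefix_swap_iff prefixeq_butlast by blast
qed (simp_all add: length_swap prefixeq_butlast)

end

lemma swap_subtrees_in_Gamma_set:
  assumes t: "tree_plan G lam" and pq: "p \<in> Gamma_set G lam X" "q \<in> Gamma_set G lam X"
    and f: "map fst p = map fst q" and z: "z \<in> Gamma_set G lam X"
  shows "swap_subtrees p q z \<in> Gamma_set G lam X"
  using z Gamma_set_replace_prefix[of p "drop (length p) z" G lam X q]
    Gamma_set_replace_prefix[of q "drop (length q) z" G lam X p] pq f
  unfolding swap_subtrees_def by (auto simp: prefix_def)

lemma iso_map_swap_subtrees:
  assumes t: "tree_plan G lam" and pq: "p \<in> Gamma_set G lam X" "q \<in> Gamma_set G lam X"
    and s: "siblings p q" and f: "map fst p = map fst q"
  shows "iso_map G (Gamma_struct G lam X) (Gamma_struct G lam X) (swap_subtrees p q)"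
proof -
  have "bij_betw (swap_subtrees p q) (Gamma_set G lam X) (Gamma_set G lam X)"
    by (rule bij_betw_byWitness[where f'="swap_subtrees p q"])
       (use swap_subtrees_in_Gamma_set[OF t pq f] siblings.swap_swap[OF s] in auto)
  then show ?thesis unfolding iso_map_def Gamma_struct_simps
    using siblings.swap_Nil[OF s] siblings.swap_butlast[OF s] siblings.swap_lcp[OF s]
      siblings.prefix_swap_iff[OF s] map_fst_swap_subtrees[OF f] by auto
qed

lemma closed_Gamma_struct: "tree_plan G lam \<Longrightarrow> closed_struct (Gamma_struct G lam X)"
  unfolding closed_struct_def Gamma_struct_simps using Gamma_set_Nil Gamma_set_butlast Gamma_set_lcp by blast

lemma Gamma_automorphism_exists:
  assumes t: "tree_plan G lam"
  shows "x \<in> Gamma_set G lam X \<Longrightarrow> x' \<in> Gamma_set G lam X \<Longrightarrow> map fst x = map fst x' \<Longrightarrow>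
    l \<le> length x \<Longrightarrow> take l x = take l x' \<Longrightarrow>
    \<exists>f. iso_map G (Gamma_struct G lam X) (Gamma_struct G lam X) f \<and> f x = x' \<and>
      (\<forall>z. \<not> prefix (take (Suc l) x) z \<and> \<not> prefix (take (Suc l) x') z \<longrightarrow> f z = z)"
proof (induction "length x - l" arbitrary: x l)
  case 0
  then have "length x' = length x" by (metis length_map)
  then have "x = x'" using 0 by (metis diff_is_0_eq le_antisym take_all)
  then show ?case using iso_map_id by (metis id_apply)
next
  case (Suc k)
  have lx: "length x' = length x" using Suc.prems by (metis length_map)
  have lt: "l < length x" using Suc.hyps by auto
  define p where "p = take (Suc l) x"
  define q where "q = take (Suc l) x'"
  have s: "siblings p q" unfolding siblings_def p_def q_def using lt lx Suc.prems
    by (auto simp: butlast_take)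
  have f: "map fst p = map fst q" unfolding p_def q_def using Suc.prems by (metis take_map)
  have pG: "p \<in> Gamma_set G lam X" "q \<in> Gamma_set G lam X"
    unfolding p_def q_def using Gamma_set_take[OF t] Suc.prems by auto
  define x1 where "x1 = swap_subtrees p q x"
  have lq: "length q = Suc l" unfolding q_def using lt lx by simp
  have x1: "x1 = q @ drop (Suc l) x"
    unfolding x1_def swap_subtrees_def p_def using lt by (simp add: take_is_prefix)
  have x1G: "x1 \<in> Gamma_set G lam X"
    unfolding x1_def using swap_subtrees_in_Gamma_set[OF t pG f Suc.prems(1)] .
  have tx1: "take (Suc l) x1 = take (Suc l) x'" using x1 lq q_def by simp
  have fx1: "map fst x1 = map fst x'"
    unfolding x1_def using map_fst_swap_subtrees[OF f] Suc.prems(3) by simp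
  have lx1: "length x1 = length x" using x1 lq lt by simp
  obtain f' where f': "iso_map G (Gamma_struct G lam X) (Gamma_struct G lam X) f'" "f' x1 = x'"
    "\<forall>z. \<not> prefix (take (Suc (Suc l)) x1) z \<and> \<not> prefix (take (Suc (Suc l)) x') z \<longrightarrow> f' z = z"
  proof -
    have "k = length x1 - Suc l" "Suc l \<le> length x1" using Suc.hyps(2) lx1 lt by simp_all
    then show ?thesis using Suc.hyps(1)[of x1 "Suc l"] x1G Suc.prems(2) fx1 tx1 that by blast
  qed
  have "prefix q (take (Suc (Suc l)) x1)" "prefix q (take (Suc (Suc l)) x')"
    using tx1 unfolding q_def by (metis take_is_prefix min.absorb1 take_take le_SucI order_refl)+
  then have "f' z = z" if "\<not> prefix p z" "\<not> prefix q z" for z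
    using f'(3) that prefix_order.trans by metis
  moreover have "swap_subtrees p q z = z" if "\<not> prefix p z" "\<not> prefix q z" for z
    using that unfolding swap_subtrees_def by auto
  ultimately show ?case
    using iso_map_comp[OF iso_map_swap_subtrees[OF t pG s f] f'(1) closed_Gamma_struct[OF t]] f'(2)
    unfolding x1_def by (intro exI[of _ "f' \<circ> swap_subtrees p q"]) (simp add: p_def q_def)
qed

section \<open>Counting nodes of \<open>\<Gamma>(X)\<close>; the polynomial \<open>P(\<Gamma>;x)\<close>\<close>

definition infty_count :: "(nat list \<Rightarrow> label) \<Rightarrow> nat \<Rightarrow> nat list \<Rightarrow> nat" where
  "infty_count lam l \<sigma> = card {k. l < k \<and> k \<le> length \<sigma> \<and> lam (take k \<sigma>) = Infty}"

lemma infty_count_Nil: "infty_count lam l [] = 0"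
  unfolding infty_count_def by auto

lemma infty_count_length: "infty_count lam (length \<sigma>) \<sigma> = 0"
  unfolding infty_count_def by auto

lemma infty_count_le: "infty_count lam l \<sigma> \<le> infty_count lam 0 \<sigma>"
  unfolding infty_count_def by (rule card_mono) auto

lemma infty_count_snoc:
  assumes "l \<le> length \<sigma>"
  shows "infty_count lam l (\<sigma> @ [i]) = infty_count lam l \<sigma> + (if lam (\<sigma> @ [i]) = Infty then 1 else 0)"
proof -
  have "{k. l < k \<and> k \<le> length (\<sigma> @ [i]) \<and> lam (take k (\<sigma> @ [i])) = Infty} =
    {k. l < k \<and> k \<le> length \<sigma> \<and> lam (take k \<sigma>) = Infty} \<union>
    (if lam (\<sigma> @ [i]) = Infty then {Suc (length \<sigma>)} else {})"
    using assms by (auto simp: le_Suc_eq)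
  then show ?thesis unfolding infty_count_def by (auto simp: card_insert_if)
qed

lemma infty_count_Suc:
  assumes "l < length \<sigma>"
  shows "infty_count lam l \<sigma> = (if lam (take (Suc l) \<sigma>) = Infty then 1 else 0) + infty_count lam (Suc l) \<sigma>"
proof -
  have "{k. l < k \<and> k \<le> length \<sigma> \<and> lam (take k \<sigma>) = Infty} =
    {k. Suc l < k \<and> k \<le> length \<sigma> \<and> lam (take k \<sigma>) = Infty} \<union>
    (if lam (take (Suc l) \<sigma>) = Infty then {Suc l} else {})"
    using assms by (auto simp: Suc_le_eq) (metis Suc_lessI)+
  then show ?thesis unfolding infty_count_def by (auto simp: card_insert_if)
qed

lemma infty_count_Cons:
  "infty_count lam 0 (i # t) = (if lam [i] = Infty then 1 else 0) + infty_count (sub_lab lam [i]) 0 t"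
proof -
  have "{k. 1 < k \<and> k \<le> length (i # t) \<and> lam (take k (i # t)) = Infty} =
    Suc ` {k. 0 < k \<and> k \<le> length t \<and> sub_lab lam [i] (take k t) = Infty}"
    by (auto simp: sub_lab_def image_iff take_Cons' split: if_splits intro!: exI[of _ "_ - 1"])
  then have "infty_count lam 1 (i # t) = infty_count (sub_lab lam [i]) 0 t"
    unfolding infty_count_def by (simp add: card_image)
  then show ?thesis using infty_count_Suc[of 0 "i # t" lam] by simp
qed

definition extensions ::
    "nat list set \<Rightarrow> (nat list \<Rightarrow> label) \<Rightarrow> nat set \<Rightarrow> nat list \<Rightarrow> (nat \<times> nat option) list \<Rightarrow>
     (nat \<times> nat option) list set" where
  "extensions G lam X \<sigma> u = {x \<in> Gamma_set G lam X. map fst x = \<sigma> \<and> prefix u x}"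

lemma card_admissible:
  assumes "finite X"
  shows "finite {t. admissible lam X \<sigma> t} \<and> card {t. admissible lam X \<sigma> t} = (if lam \<sigma> = Infty then card X else 1)"
proof (cases "lam \<sigma> = Infty")
  case True
  then have "{t. admissible lam X \<sigma> t} = Some ` X" unfolding admissible_def by auto
  then show ?thesis using assms True by (simp add: card_image)
next
  case False
  then have "{t. admissible lam X \<sigma> t} = {None}" unfolding admissible_def by auto
  then show ?thesis using False by simp
qed

lemma extensions_snoc:
  assumes t: "tree_plan G lam" and u: "length u \<le> length \<sigma>" and \<sigma>: "\<sigma> @ [i] \<in> G"
  shows "extensions G lam X (\<sigma> @ [i]) u =
    (\<lambda>(z, t). z @ [(i, t)]) ` (extensions G lam X \<sigma> u \<times> {t. admissible lam X (\<sigma> @ [i]) t})"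
proof (intro equalityI subsetI)
  fix x assume x: "x \<in> extensions G lam X (\<sigma> @ [i]) u"
  then have xG: "x \<in> Gamma_set G lam X" and fx: "map fst x = \<sigma> @ [i]" and ux: "prefix u x"
    unfolding extensions_def by auto
  have lx: "length x = Suc (length \<sigma>)" using fx by (metis length_append_singleton length_map)
  then obtain z a where za: "x = z @ [a]" by (metis length_Suc_conv_rev)
  have "admissible lam X (map fst (take (Suc (length \<sigma>)) x)) (snd (x ! length \<sigma>))"
    using xG lx unfolding mem_Gamma_set_iff by auto
  moreover have "z \<in> Gamma_set G lam X" using Gamma_set_butlast[OF t xG] za by simp
  moreover have "prefix u z" using prefix_butlast_if_shorter[OF ux] u lx za by simp
  ultimately show "x \<in> (\<lambda>(z, t). z @ [(i, t)]) ` (extensions G lam X \<sigma> u \<times> {t. admissible lam X (\<sigma> @ [i]) t})"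
    using za fx lx unfolding extensions_def
    by (auto intro!: image_eqI[where x="(z, snd a)"] simp: prod_eq_iff nth_append)
next
  fix x assume "x \<in> (\<lambda>(z, t). z @ [(i, t)]) ` (extensions G lam X \<sigma> u \<times> {t. admissible lam X (\<sigma> @ [i]) t})"
  then show "x \<in> extensions G lam X (\<sigma> @ [i]) u"
    using \<sigma> by (auto simp: extensions_def prefix_def intro!: Gamma_set_snoc)
qed

lemma card_extensions:
  assumes t: "tree_plan G lam" and X: "finite X" and u: "u \<in> Gamma_set G lam X"
  shows "\<sigma> \<in> G \<Longrightarrow> prefix (map fst u) \<sigma> \<Longrightarrow>
    finite (extensions G lam X \<sigma> u) \<and> card (extensions G lam X \<sigma> u) = card X ^ infty_count lam (length u) \<sigma>"
proof (induction \<sigma> rule: rev_induct)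
  case Nil
  then have "extensions G lam X [] u = {[]}" unfolding extensions_def using Gamma_set_Nil[OF t] by auto
  then show ?case using Nil by (simp add: infty_count_Nil)
next
  case (snoc i \<sigma>)
  show ?case
  proof (cases "map fst u = \<sigma> @ [i]")
    case True
    then have "extensions G lam X (\<sigma> @ [i]) u = {u}" unfolding extensions_def using u
      by (auto simp: prefix_def)
    moreover have "length u = length (\<sigma> @ [i])" using True by (metis length_map)
    ultimately show ?thesis using infty_count_length[of lam "\<sigma> @ [i]"] by simp
  next
    case False
    have pu: "prefix (map fst u) \<sigma>" using snoc.prems(2) False by (simp add: prefix_snoc)
    have "\<sigma> \<in> G" using tree_plan_take[OF t snoc.prems(1), of "length \<sigma>"] by simp
    note IH = snoc.IH[OF this pu]
    have lu: "length u \<le> length \<sigma>" using pu by (metis length_map prefix_length_le)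
    have inj: "inj_on (\<lambda>(z, t). z @ [(i, t)]) A" for A :: "((nat \<times> nat option) list \<times> nat option) set"
      by (auto simp: inj_on_def)
    show ?thesis
      using IH card_admissible[OF X, of lam "\<sigma> @ [i]"] infty_count_snoc[OF lu, of lam i]
      unfolding extensions_snoc[OF t lu snoc.prems(1)] card_image[OF inj]
      by (simp add: card_cartesian_product)
  qed
qed

lemma card_Gamma_set:
  assumes t: "tree_plan G lam" and X: "finite X"
  shows "finite (Gamma_set G lam X) \<and> card (Gamma_set G lam X) = (\<Sum>\<sigma>\<in>G. card X ^ infty_count lam 0 \<sigma>)"
proof -
  have e: "Gamma_set G lam X = (\<Union>\<sigma>\<in>G. extensions G lam X \<sigma> [])"
    unfolding extensions_def by (auto simp: mem_Gamma_set_iff)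
  have fG: "finite G" using t unfolding tree_plan_def by auto
  have each: "\<And>\<sigma>. \<sigma> \<in> G \<Longrightarrow> finite (extensions G lam X \<sigma> []) \<and>
      card (extensions G lam X \<sigma> []) = card X ^ infty_count lam 0 \<sigma>"
    using card_extensions[OF t X Gamma_set_Nil[OF t]] by simp
  have "card (\<Union>\<sigma>\<in>G. extensions G lam X \<sigma> []) = (\<Sum>\<sigma>\<in>G. card (extensions G lam X \<sigma> []))"
    by (rule card_UN_disjoint) (use fG each in \<open>auto simp: extensions_def\<close>)
  then show ?thesis unfolding e using fG each by auto
qed

lemma card_Gamma_set_atLeastAtMost:
  "tree_plan G lam \<Longrightarrow> card (Gamma_set G lam {1..n}) = (\<Sum>\<sigma>\<in>G. n ^ infty_count lam 0 \<sigma>)"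
  using card_Gamma_set[of G lam "{1..n}"] by simp

lemma finite_sub_plan: "finite G \<Longrightarrow> finite (sub_plan G s)"
proof -
  assume "finite G"
  moreover have "sub_plan G s \<subseteq> drop (length s) ` G"
    unfolding sub_plan_def by (auto intro: rev_image_eqI)
  ultimately show ?thesis by (meson finite_imageI finite_subset)
qed

lemma tree_plan_sub_plan:
  assumes t: "tree_plan G lam" and i: "[i] \<in> G"
  shows "tree_plan (sub_plan G [i]) (sub_lab lam [i])"
  unfolding tree_plan_def
proof (intro conjI ballI allI)
  show "finite (sub_plan G [i])" using t finite_sub_plan unfolding tree_plan_def by blast
  show "[] \<in> sub_plan G [i]" using i by (simp add: sub_plan_def)
  show "sub_lab lam [i] [] = One" by (simp add: sub_lab_def)
  fix s k assume "s \<in> sub_plan G [i]"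
  then have "take (Suc k) (i # s) \<in> G" using tree_plan_take[OF t] by (simp add: sub_plan_def del: take_Suc_Cons)
  then show "take k s \<in> sub_plan G [i]" by (simp add: sub_plan_def)
qed

lemma tpoly_aux_eq_sum:
  "tree_plan G lam \<Longrightarrow> Max (length ` G) \<le> k \<Longrightarrow>
   tpoly_aux k G lam = (\<Sum>\<sigma>\<in>G. [:0, 1:] ^ infty_count lam 0 \<sigma>)"
proof (induction k arbitrary: G lam)
  case 0
  then have "G = {[]}" unfolding tree_plan_def
    by auto (metis Max_ge finite_imageI image_eqI le_zero_eq length_0_conv)
  then show ?case by (simp add: infty_count_Nil)
next
  case (Suc k)
  have fG: "finite G" and nG: "[] \<in> G" and cG: "\<forall>s\<in>G. \<forall>k. take k s \<in> G"
    using Suc.prems unfolding tree_plan_def by auto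
  define I where "I = {i. [i] \<in> G}"
  have fI: "finite I" unfolding I_def using fG
    by (rule finite_surj[where f=hd]) (force simp: image_iff)
  have sub_G: "\<And>i. sub_plan G [i] = {s. i # s \<in> G}" unfolding sub_plan_def by simp
  have fin: "finite (sub_plan G [i])" for i using fG by (rule finite_sub_plan)
  have IH: "tpoly_aux k (sub_plan G [i]) (sub_lab lam [i]) =
      (\<Sum>s\<in>sub_plan G [i]. [:0, 1:] ^ infty_count (sub_lab lam [i]) 0 s)" if "i \<in> I" for i
  proof (rule Suc.IH[OF tree_plan_sub_plan[OF Suc.prems(1)]])
    show "[i] \<in> G" using that unfolding I_def by simp
    have "length s \<le> k" if "s \<in> sub_plan G [i]" for s
    proof -
      have "length (i # s) \<le> Max (length ` G)"
        using fG that unfolding sub_G by (intro Max_ge) (auto intro: image_eqI[where x="i # s"])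
      then show ?thesis using Suc.prems(2) by simp
    qed
    moreover have "sub_plan G [i] \<noteq> {}" using that unfolding I_def sub_plan_def by auto
    ultimately show "Max (length ` sub_plan G [i]) \<le> k" using fin[of i] by simp
  qed
  have G: "G = insert [] (\<Union>i\<in>I. Cons i ` sub_plan G [i])"
    unfolding I_def sub_G using nG cG
    by (auto simp: image_iff) (metis neq_Nil_conv take_Suc_Cons take_0 append_Cons append_Nil)
  let ?f = "\<lambda>\<sigma>. ([:0, 1:] :: int poly) ^ infty_count lam 0 \<sigma>"
  have "(\<Sum>\<sigma>\<in>Cons i ` sub_plan G [i]. ?f \<sigma>) =
      lab_factor (lam [i]) * tpoly_aux k (sub_plan G [i]) (sub_lab lam [i])" if "i \<in> I" for i
    using IH[OF that] by (cases "lam [i]")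
      (simp_all add: sum.reindex sum_distrib_left infty_count_Cons lab_factor_def)
  moreover have "(\<Sum>\<sigma>\<in>G. ?f \<sigma>) = 1 + (\<Sum>\<sigma>\<in>(\<Union>i\<in>I. Cons i ` sub_plan G [i]). ?f \<sigma>)"
    by (subst G, subst sum.insert) (auto simp: fI fin infty_count_Nil)
  moreover have "(\<Sum>\<sigma>\<in>(\<Union>i\<in>I. Cons i ` sub_plan G [i]). ?f \<sigma>) =
      (\<Sum>i\<in>I. \<Sum>\<sigma>\<in>Cons i ` sub_plan G [i]. ?f \<sigma>)"
    by (rule sum.UNION_disjoint) (auto simp: fI fin)
  ultimately show ?case unfolding I_def by simp
qed

lemma tpoly_eq_sum: "tree_plan G lam \<Longrightarrow> tpoly G lam = (\<Sum>\<sigma>\<in>G. [:0, 1:] ^ infty_count lam 0 \<sigma>)"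
  unfolding tpoly_def by (rule tpoly_aux_eq_sum) auto

text \<open>By \<open>tpoly_eq_sum\<close>, these are the degree and the leading coefficient of \<open>P(\<Gamma>;x)\<close>.\<close>

definition plan_degree :: "nat list set \<Rightarrow> (nat list \<Rightarrow> label) \<Rightarrow> nat" where
  "plan_degree G lam = Max (infty_count lam 0 ` G)"

definition plan_leading :: "nat list set \<Rightarrow> (nat list \<Rightarrow> label) \<Rightarrow> nat" where
  "plan_leading G lam = card {\<sigma>\<in>G. infty_count lam 0 \<sigma> = plan_degree G lam}"

lemma degree_tpoly:
  assumes t: "tree_plan G lam"
  shows "degree (tpoly G lam) = plan_degree G lam"
proof -
  have fG: "finite G" and nG: "[] \<in> G" using t unfolding tree_plan_def by auto
  define D where "D = plan_degree G lam"
  have "([:0, 1:] :: int poly) ^ k = monom 1 k" for k by (simp add: monom_altdef)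
  then have c: "coeff (tpoly G lam) n = int (card {\<sigma>\<in>G. infty_count lam 0 \<sigma> = n})" for n
    unfolding tpoly_eq_sum[OF t] coeff_sum using fG by (simp add: sum.If_cases Int_def)
  have "infty_count lam 0 \<sigma> \<le> D" if "\<sigma> \<in> G" for \<sigma> unfolding D_def plan_degree_def using fG that by simp
  then have empty: "{\<sigma>\<in>G. infty_count lam 0 \<sigma> = i} = {}" if "D < i" for i using that by fastforce
  have "coeff (tpoly G lam) i = 0" if "D < i" for i unfolding c empty[OF that] by simp
  then have "degree (tpoly G lam) \<le> D" by (intro degree_le) auto
  moreover have "D \<in> infty_count lam 0 ` G" unfolding D_def plan_degree_def using fG nG by (intro Max_in) auto
  then have "coeff (tpoly G lam) D \<noteq> 0" unfolding c using fG by (auto simp: card_eq_0_iff)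
  then have "D \<le> degree (tpoly G lam)" by (rule le_degree)
  ultimately show ?thesis unfolding D_def by simp
qed

section \<open>The cells cut out by a parameter tuple\<close>

text \<open>Parameter \<open>0\<close> is the root, matching the convention of \<^const>\<open>env\<close>, so that every node meets
  some parameter.\<close>

definition param :: "'a list list \<Rightarrow> nat \<Rightarrow> 'a list" where
  "param b j = (if j = 0 then [] else b ! (j - 1))"

text \<open>A node \<open>x\<close> that is an initial segment of some parameter is the unique one of its shape \<open>\<tau>\<close>
  below the first such parameter \<open>b\<^sub>j\<close> (cell \<open>Point j \<tau>\<close>). Otherwise its meets with the parameters have
  a longest one, first attained at \<open>b\<^sub>j\<close>, and the cell \<open>Branch \<sigma> j \<tau>\<close> records the shapes \<open>\<sigma>\<close> of \<open>x\<close>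
  and \<open>\<tau>\<close> of that meet; any two of its nodes are exchanged by an automorphism fixing the parameters.\<close>

datatype cell = Branch "nat list" nat "nat list" | Point nat "nat list"

fun in_cell :: "(nat \<times> nat option) list list \<Rightarrow> cell \<Rightarrow> (nat \<times> nat option) list \<Rightarrow> bool" where
  "in_cell b (Branch \<sigma> j \<tau>) x \<longleftrightarrow> map fst x = \<sigma> \<and> map fst (lcp x (param b j)) = \<tau> \<and>
     (\<forall>j'\<le>length b. prefix (lcp x (param b j')) (lcp x (param b j))) \<and>
     (\<forall>j'<j. lcp x (param b j') \<noteq> lcp x (param b j)) \<and> x \<noteq> lcp x (param b j)"
| "in_cell b (Point j \<tau>) x \<longleftrightarrow> prefix x (param b j) \<and> map fst x = \<tau> \<and> (\<forall>j'<j. \<not> prefix x (param b j'))"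

definition cell_types :: "nat list set \<Rightarrow> nat \<Rightarrow> cell set" where
  "cell_types G m = {Branch \<sigma> j \<tau> | \<sigma> j \<tau>. \<sigma> \<in> G \<and> j \<le> m \<and> \<tau> \<in> G} \<union> {Point j \<tau> | j \<tau>. j \<le> m \<and> \<tau> \<in> G}"

definition cell_set ::
    "nat list set \<Rightarrow> (nat list \<Rightarrow> label) \<Rightarrow> nat set \<Rightarrow> (nat \<times> nat option) list list \<Rightarrow> cell \<Rightarrow>
     (nat \<times> nat option) list set" where
  "cell_set G lam X b c = {x \<in> Gamma_set G lam X. in_cell b c x}"

lemma finite_cell_types:
  assumes "finite G"
  shows "finite (cell_types G m)"
proof -
  have "cell_types G m = (\<lambda>(\<sigma>, j, \<tau>). Branch \<sigma> j \<tau>) ` (G \<times> {..m} \<times> G) \<union> (\<lambda>(j, \<tau>). Point j \<tau>) ` ({..m} \<times> G)"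
    unfolding cell_types_def by (auto simp: image_iff)
  then show ?thesis using assms by simp
qed

lemma map_eq_if_params_fixed: "(\<forall>j\<le>length b. f (param b j) = param b j) \<Longrightarrow> map f b = b"
proof (rule nth_equalityI)
  fix i assume "\<forall>j\<le>length b. f (param b j) = param b j" "i < length (map f b)"
  then have "f (param b (Suc i)) = param b (Suc i)" by simp
  then show "map f b ! i = b ! i" using \<open>i < length (map f b)\<close> by (simp add: param_def)
qed simp

lemma in_cell_unique:
  assumes "in_cell b c x" "in_cell b c' x" "c \<in> cell_types G (length b)" "c' \<in> cell_types G (length b)"
  shows "c = c'"
proof (cases c)
  case (Branch \<sigma> j \<tau>)
  show ?thesis
  proof (cases c')
    case (Branch \<sigma>' j' \<tau>')
    have "j \<le> length b" "j' \<le> length b" using assms \<open>c = _\<close> Branch unfolding cell_types_def by auto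
    then have "lcp x (param b j) = lcp x (param b j')"
      using assms(1,2) \<open>c = _\<close> Branch by (simp add: prefix_order.antisym)
    then have "j = j'" using assms(1,2) \<open>c = _\<close> Branch by (metis in_cell.simps(1) nat_neq_iff)
    then show ?thesis using assms(1,2) \<open>c = _\<close> Branch by simp
  next
    case (Point j' \<tau>')
    then have "lcp x (param b j') = x" using assms(2) by (simp add: lcp_eq_left)
    moreover have "j' \<le> length b" using assms Point unfolding cell_types_def by auto
    ultimately show ?thesis using assms(1) \<open>c = _\<close> by simp (metis lcp_prefix1 prefix_order.antisym)
  qed
next
  case (Point j \<tau>)
  show ?thesis
  proof (cases c')
    case (Branch \<sigma>' j' \<tau>')
    have "lcp x (param b j) = x" using assms(1) Point by (simp add: lcp_eq_left)
    moreover have "j \<le> length b" using assms Point unfolding cell_types_def by auto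
    ultimately show ?thesis using assms(2) Branch by simp (metis lcp_prefix1 prefix_order.antisym)
  next
    case (Point j' \<tau>')
    then have "j = j'" using assms(1,2) \<open>c = Point j \<tau>\<close> by simp (metis linorder_neqE_nat)
    then show ?thesis using assms(1,2) \<open>c = Point j \<tau>\<close> Point by simp
  qed
qed

lemma in_cell_exists:
  assumes t: "tree_plan G lam" and x: "x \<in> Gamma_set G lam X"
  shows "\<exists>c\<in>cell_types G (length b). in_cell b c x"
proof (cases "\<exists>j\<le>length b. prefix x (param b j)")
  case True
  define j where "j = (LEAST j. j \<le> length b \<and> prefix x (param b j))"
  have j: "j \<le> length b" "prefix x (param b j)" using LeastI_ex[OF True] unfolding j_def by auto
  have "\<forall>j'<j. \<not> prefix x (param b j')"
    using not_less_Least j j_def by (metis less_le_trans less_imp_le)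
  moreover have "map fst x \<in> G" using x unfolding mem_Gamma_set_iff by auto
  ultimately show ?thesis using j unfolding cell_types_def by (intro bexI[of _ "Point j (map fst x)"]) auto
next
  case False
  define g where "g j = length (lcp x (param b j))" for j
  define M where "M = Max (g ` {..length b})"
  have "M \<in> g ` {..length b}" unfolding M_def by (intro Max_in) auto
  then have ex: "\<exists>j. j \<le> length b \<and> g j = M" by auto
  define j where "j = (LEAST j. j \<le> length b \<and> g j = M)"
  have j: "j \<le> length b" "g j = M" using LeastI_ex[OF ex] unfolding j_def by auto
  have "prefix (lcp x (param b j')) (lcp x (param b j))" if "j' \<le> length b" for j'
    using that j lcp_prefix1 unfolding g_def M_def by (metis Max_ge finite_atMost finite_imageI
        atMost_iff image_eqI prefix_length_prefix)
  moreover have "lcp x (param b j') \<noteq> lcp x (param b j)" if "j' < j" for j'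
  proof
    assume "lcp x (param b j') = lcp x (param b j)"
    then have "j' \<le> length b \<and> g j' = M" using that j unfolding g_def by simp
    then show False using not_less_Least that unfolding j_def by blast
  qed
  moreover have "x \<noteq> lcp x (param b j)" using False j lcp_prefix2 by metis
  moreover have "map fst x \<in> G" "map fst (lcp x (param b j)) \<in> G"
    using x Gamma_set_lcp[OF t x] unfolding mem_Gamma_set_iff by auto
  ultimately show ?thesis using j(1) unfolding cell_types_def
    by (intro bexI[of _ "Branch (map fst x) j (map fst (lcp x (param b j)))"]) auto
qed

lemma lcp_param_eq:
  assumes "in_cell b (Branch \<sigma> j \<tau>) x" "in_cell b (Branch \<sigma> j \<tau>) x'"
  shows "lcp x' (param b j) = lcp x (param b j)"
proof -
  have "length (lcp x' (param b j)) = length (lcp x (param b j))"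
    using assms by (metis in_cell.simps(1) length_map)
  then show ?thesis using prefix_same_length_eq lcp_prefix2 by metis
qed

lemma not_prefix_param:
  assumes "in_cell b (Branch \<sigma> j \<tau>) x" "j' \<le> length b"
  shows "\<not> prefix (take (Suc (length (lcp x (param b j)))) x) (param b j')"
proof
  let ?u = "lcp x (param b j)" and ?v = "take (Suc (length (lcp x (param b j)))) x"
  assume "prefix ?v (param b j')"
  then have "prefix ?v (lcp x (param b j'))" using prefix_lcp_iff take_is_prefix by blast
  also have "prefix (lcp x (param b j')) ?u" using assms by simp
  finally have "length ?v \<le> length ?u" by (rule prefix_length_le)
  moreover have "length ?u < length x"
    using assms(1) lcp_prefix1 by (metis in_cell.simps(1) le_neq_implies_less prefix_length_le
        prefix_same_length_eq prefix_order.refl)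
  ultimately show False by simp
qed

lemma branch_cell_automorphism:
  assumes t: "tree_plan G lam"
    and x: "x \<in> Gamma_set G lam X" "x' \<in> Gamma_set G lam X"
    and c: "in_cell b (Branch \<sigma> j \<tau>) x" "in_cell b (Branch \<sigma> j \<tau>) x'"
  shows "\<exists>f. iso_map G (Gamma_struct G lam X) (Gamma_struct G lam X) f \<and> f x = x' \<and>
    (\<forall>j'\<le>length b. f (param b j') = param b j')"
proof -
  let ?u = "lcp x (param b j)"
  have u': "lcp x' (param b j) = ?u" by (rule lcp_param_eq[OF c])
  have ux: "prefix ?u x" "prefix ?u x'" using lcp_prefix1 u' by metis+
  have "take (length ?u) x = take (length ?u) x'" using ux by (metis append_eq_conv_conj prefix_def)
  moreover have "map fst x = map fst x'" using c by simp
  moreover have "length ?u \<le> length x" using ux prefix_length_le by blast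
  ultimately obtain f where f: "iso_map G (Gamma_struct G lam X) (Gamma_struct G lam X) f" "f x = x'"
    "\<forall>z. \<not> prefix (take (Suc (length ?u)) x) z \<and> \<not> prefix (take (Suc (length ?u)) x') z \<longrightarrow> f z = z"
    using Gamma_automorphism_exists[OF t x] by blast
  then show ?thesis using not_prefix_param[OF c(1)] not_prefix_param[OF c(2)] u' by metis
qed

lemma sat_in_cell_iff:
  assumes t: "tree_plan G lam" and b: "set b \<subseteq> Gamma_set G lam X"
    and x: "x \<in> Gamma_set G lam X" "x' \<in> Gamma_set G lam X"
    and c: "in_cell b c x" "in_cell b c x'"
    and \<phi>: "in_lang G \<phi>"
  shows "sat (Gamma_struct G lam X) (env (Gamma_struct G lam X) x b) \<phi> \<longleftrightarrow>
    sat (Gamma_struct G lam X) (env (Gamma_struct G lam X) x' b) \<phi>"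
proof (cases c)
  case (Branch \<sigma> j \<tau>)
  obtain f where f: "iso_map G (Gamma_struct G lam X) (Gamma_struct G lam X) f" "f x = x'"
    "\<forall>j'\<le>length b. f (param b j') = param b j'"
    using branch_cell_automorphism[OF t x c[unfolded Branch]] by blast
  have "\<forall>v. env (Gamma_struct G lam X) x b v \<in> carrier (Gamma_struct G lam X)"
    using env_in_carrier[of "Gamma_struct G lam X" x b] Gamma_set_Nil[OF t] x b
    by (simp add: Gamma_struct_simps)
  then have "sat (Gamma_struct G lam X) (env (Gamma_struct G lam X) x b) \<phi> \<longleftrightarrow>
      sat (Gamma_struct G lam X) (f \<circ> env (Gamma_struct G lam X) x b) \<phi>"
    by (rule sat_iso[OF closed_Gamma_struct[OF t] f(1) \<phi>])
  also have "f \<circ> env (Gamma_struct G lam X) x b = env (Gamma_struct G lam X) x' b"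
    using comp_env[of f] f map_eq_if_params_fixed[OF f(3)] unfolding iso_map_def by simp
  finally show ?thesis .
next
  case (Point j \<tau>)
  then have "x = x'" using c prefix_same_length_eq by (metis in_cell.simps(2) length_map)
  then show ?thesis by simp
qed

fun cell_exp :: "(nat list \<Rightarrow> label) \<Rightarrow> cell \<Rightarrow> nat" where
  "cell_exp lam (Branch \<sigma> j \<tau>) = infty_count lam (length \<tau>) \<sigma>"
| "cell_exp lam (Point j \<tau>) = 0"

lemma cell_exp_le_plan_degree:
  assumes "finite G" "c \<in> cell_types G m"
  shows "cell_exp lam c \<le> plan_degree G lam"
proof (cases c)
  case (Branch \<sigma> j \<tau>)
  then have "infty_count lam 0 \<sigma> \<le> plan_degree G lam"
    using assms unfolding cell_types_def plan_degree_def by auto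
  then show ?thesis using Branch infty_count_le[of lam "length \<tau>" \<sigma>] by simp
qed simp

lemma card_point_cell_le: "card (cell_set G lam X b (Point j \<tau>)) \<le> 1"
proof -
  have "cell_set G lam X b (Point j \<tau>) \<subseteq> {take (length \<tau>) (param b j)}"
    unfolding cell_set_def by (auto simp: prefix_def)
  then show ?thesis using card_mono[of "{take (length \<tau>) (param b j)}"] by simp
qed

lemma card_snoc_prefix_le:
  assumes "inj f"
  shows "finite {s. \<exists>k\<le>m. prefix (u @ [f s]) (ys k)} \<and> card {s. \<exists>k\<le>m. prefix (u @ [f s]) (ys k)} \<le> Suc m"
proof -
  have "{s. \<exists>k\<le>m. prefix (u @ [f s]) (ys k)} \<subseteq> (\<lambda>k. inv f (ys k ! length u)) ` {..m}"
  proof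
    fix s assume "s \<in> {s. \<exists>k\<le>m. prefix (u @ [f s]) (ys k)}"
    then obtain k zs where "k \<le> m" "ys k = u @ f s # zs" by (auto simp: prefix_def)
    then show "s \<in> (\<lambda>k. inv f (ys k ! length u)) ` {..m}"
      by (intro image_eqI[of _ _ k]) (simp_all add: nth_append inv_f_f[OF assms])
  qed
  moreover have "card ((\<lambda>k. inv f (ys k ! length u)) ` {..m}) \<le> Suc m"
    using card_image_le[of "{..m}"] by simp
  ultimately show ?thesis by (meson card_mono finite_atMost finite_imageI finite_subset le_trans)
qed

locale branch_cell =
  fixes G lam X b \<sigma> j \<tau> x0
  assumes tree: "tree_plan G lam" and finite_X: "finite X"
    and x0: "x0 \<in> Gamma_set G lam X" and in_cell_x0: "in_cell b (Branch \<sigma> j \<tau>) x0" and j: "j \<le> length b"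
begin

definition base where "base = lcp x0 (param b j)"

lemma base_prefix: "prefix base x0" "prefix base (param b j)"
  unfolding base_def by (rule lcp_prefix1, rule lcp_prefix2)

lemma base_in_Gamma_set: "base \<in> Gamma_set G lam X"
  using Gamma_set_lcp[OF tree x0] unfolding base_def .

lemma map_fst_x0: "map fst x0 = \<sigma>"
  using in_cell_x0 by simp

lemma map_fst_base: "map fst base = \<tau>"
  using in_cell_x0 unfolding base_def by simp

lemma sigma_in_G: "\<sigma> \<in> G"
  using x0 map_fst_x0 unfolding mem_Gamma_set_iff by auto

lemma length_base: "length base = length \<tau>"
  using map_fst_base by (metis length_map)

lemma length_base_less: "length base < length \<sigma>"
proof -
  have "base \<noteq> x0" using in_cell_x0 unfolding base_def by auto
  then show ?thesis using base_prefix(1) map_fst_x0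
    by (metis le_neq_implies_less length_map prefix_length_le prefix_same_length_eq prefix_order.refl)
qed

lemma cell_subset_extensions: "cell_set G lam X b (Branch \<sigma> j \<tau>) \<subseteq> extensions G lam X \<sigma> base"
proof
  fix x assume "x \<in> cell_set G lam X b (Branch \<sigma> j \<tau>)"
  then have x: "x \<in> Gamma_set G lam X" "in_cell b (Branch \<sigma> j \<tau>) x" unfolding cell_set_def by auto
  then have "lcp x (param b j) = base" using lcp_param_eq[OF in_cell_x0] unfolding base_def by blast
  then have "prefix base x" by (metis lcp_prefix1)
  then show "x \<in> extensions G lam X \<sigma> base" using x unfolding extensions_def by auto
qed

lemma card_branch_cell_le:
  "finite (cell_set G lam X b (Branch \<sigma> j \<tau>)) \<and>
   card (cell_set G lam X b (Branch \<sigma> j \<tau>)) \<le> card X ^ infty_count lam (length \<tau>) \<sigma>"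
  using card_extensions[OF tree finite_X base_in_Gamma_set sigma_in_G] base_prefix(1) map_fst_x0
    cell_subset_extensions length_base
  by (metis card_mono finite_subset map_mono_prefix)

lemma extensions_subset_cell:
  assumes v: "prefix base v" "length v = Suc (length base)" "\<not> (\<exists>j'\<le>length b. prefix v (param b j'))"
  shows "extensions G lam X \<sigma> v \<subseteq> cell_set G lam X b (Branch \<sigma> j \<tau>)"
proof
  fix x assume "x \<in> extensions G lam X \<sigma> v"
  then have xG: "x \<in> Gamma_set G lam X" and fx: "map fst x = \<sigma>" and vx: "prefix v x"
    unfolding extensions_def by auto
  have ux: "prefix base x" using v(1) vx by (rule prefix_order.trans)
  have tv: "take (Suc (length base)) x = v" using vx v(2) by (metis append_eq_conv_conj prefix_def)
  have lux: "length base < length x" using prefix_length_le[OF vx] v(2) by simp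
  have l1: "lcp x (param b j) = base"
    by (rule lcp_eq_if_diverges[OF ux base_prefix(2) lux]) (use tv v(3) j in auto)
  have l2: "prefix (lcp x (param b j')) base" if "j' \<le> length b" for j'
  proof (rule ccontr)
    assume "\<not> ?thesis"
    then have "prefix v (lcp x (param b j'))"
      using prefix_take_Suc_if_not_prefix[OF lcp_prefix1 ux] tv by metis
    then show False using v(3) that lcp_prefix2 prefix_order.trans by metis
  qed
  have "lcp x (param b j') \<noteq> base" if "j' < j" for j'
  proof -
    have "lcp x (param b j') = lcp base (param b j')" by (rule lcp_eq_lcp_if_between[OF ux l2]) (use that j in auto)
    moreover have "lcp x0 (param b j') = lcp base (param b j')"
      by (rule lcp_eq_lcp_if_between[OF base_prefix(1)]) (use in_cell_x0 that j in \<open>auto simp: base_def\<close>)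
    moreover have "lcp x0 (param b j') \<noteq> base" using in_cell_x0 that unfolding base_def by auto
    ultimately show ?thesis by simp
  qed
  then have "in_cell b (Branch \<sigma> j \<tau>) x" using fx l1 l2 lux map_fst_base by auto
  then show "x \<in> cell_set G lam X b (Branch \<sigma> j \<tau>)" using xG unfolding cell_set_def by auto
qed

lemma card_extensions_child:
  assumes "v \<in> Gamma_set G lam X" "length v = Suc (length base)" "map fst v = take (Suc (length base)) \<sigma>"
  shows "finite (extensions G lam X \<sigma> v) \<and>
    card (extensions G lam X \<sigma> v) = card X ^ infty_count lam (Suc (length base)) \<sigma>"
  using card_extensions[OF tree finite_X assms(1) sigma_in_G] assms(2,3) by (simp add: take_is_prefix)

lemma infty_count_base:
  "infty_count lam (length base) \<sigma> =
    (if lam (take (Suc (length base)) \<sigma>) = Infty then 1 else 0) + infty_count lam (Suc (length base)) \<sigma>"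
  using infty_count_Suc length_base_less by simp

lemma card_branch_cell_ge_One:
  assumes "lam (take (Suc (length base)) \<sigma>) \<noteq> Infty"
  shows "card X ^ infty_count lam (length base) \<sigma> \<le> card (cell_set G lam X b (Branch \<sigma> j \<tau>))"
proof -
  define v where "v = take (Suc (length base)) x0"
  have vG: "v \<in> Gamma_set G lam X" unfolding v_def by (rule Gamma_set_take[OF tree x0])
  have bv: "prefix base v" unfolding v_def using base_prefix(1) by (rule prefix_take_if_shorter) simp
  have lv: "length v = Suc (length base)" unfolding v_def using length_base_less map_fst_x0 by auto
  have fv: "map fst v = take (Suc (length base)) \<sigma>" unfolding v_def using map_fst_x0 by (metis take_map)
  have "\<not> (\<exists>j'\<le>length b. prefix v (param b j'))"
    using not_prefix_param[OF in_cell_x0] unfolding v_def base_def by blast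
  then have "card (extensions G lam X \<sigma> v) \<le> card (cell_set G lam X b (Branch \<sigma> j \<tau>))"
    by (intro card_mono[OF conjunct1[OF card_branch_cell_le] extensions_subset_cell[OF bv lv]])
  moreover have "card (extensions G lam X \<sigma> v) = card X ^ infty_count lam (Suc (length base)) \<sigma>"
    using card_extensions_child[OF vG lv fv] by simp
  ultimately show ?thesis using infty_count_base assms by simp
qed

lemma card_branch_cell_ge_Infty:
  assumes inf: "lam (take (Suc (length base)) \<sigma>) = Infty" and X: "X = {1..n}"
  shows "(real n - real (Suc (length b))) * real n ^ infty_count lam (Suc (length base)) \<sigma>
           \<le> real (card (cell_set G lam X b (Branch \<sigma> j \<tau>)))"
proof -
  define k where "k = infty_count lam (Suc (length base)) \<sigma>"
  define i where "i = \<sigma> ! length base"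
  define v where "v s = base @ [(i, Some s)]" for s
  have v: "prefix base (v s)" "length (v s) = Suc (length base)" for s unfolding v_def by auto
  have "prefix (map fst base) \<sigma>" using map_mono_prefix[OF base_prefix(1), of fst] map_fst_x0 by simp
  then have "take (length base) \<sigma> = map fst base" by (metis append_eq_conv_conj length_map prefix_def)
  then have fv: "map fst (v s) = take (Suc (length base)) \<sigma>" for s
    using length_base_less by (simp add: v_def i_def take_Suc_conv_app_nth)
  have vG: "v s \<in> Gamma_set G lam X" if "s \<in> X" for s
  proof -
    have "map fst base @ [i] = take (Suc (length base)) \<sigma>" using fv[of s] by (simp add: v_def)
    then show ?thesis unfolding v_def using Gamma_set_snoc[OF base_in_Gamma_set] that inf
        tree_plan_take[OF tree sigma_in_G] by (simp add: admissible_def)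
  qed
  define Good where "Good = {s \<in> X. \<not> (\<exists>j'\<le>length b. prefix (v s) (param b j'))}"
  have fin_Good: "finite Good" "Good \<subseteq> X" using X unfolding Good_def by auto
  have "X - Good \<subseteq> {s. \<exists>j'\<le>length b. prefix (base @ [(i, Some s)]) (param b j')}"
    unfolding Good_def v_def by blast
  moreover have "inj (\<lambda>s. (i, Some s))" by (simp add: inj_def)
  note card_snoc_prefix_le[OF this, of "length b" base "param b"]
  ultimately have "card (X - Good) \<le> Suc (length b)" by (meson card_mono le_trans)
  then have good: "real n - real (Suc (length b)) \<le> real (card Good)"
    using card_Diff_subset[OF fin_Good] card_mono[OF _ fin_Good(2)] X by simp
  have disj: "extensions G lam X \<sigma> (v s) \<inter> extensions G lam X \<sigma> (v s') = {}" if "s \<noteq> s'" for s s'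
    using that prefix_same_length_eq[of "v s" _ "v s'"] v(2) unfolding extensions_def v_def by auto
  have "card (\<Union>s\<in>Good. extensions G lam X \<sigma> (v s)) = (\<Sum>s\<in>Good. card (extensions G lam X \<sigma> (v s)))"
    using fin_Good card_extensions_child[OF vG v(2) fv] disj by (intro card_UN_disjoint) auto
  also have "\<dots> = (\<Sum>s\<in>Good. n ^ k)"
    using fin_Good card_extensions_child[OF vG v(2) fv] X unfolding k_def by (intro sum.cong) auto
  also have "\<dots> = card Good * n ^ k" by simp
  finally have "card Good * n ^ k \<le> card (cell_set G lam X b (Branch \<sigma> j \<tau>))"
    using extensions_subset_cell[OF v] card_branch_cell_le unfolding Good_def
    by (metis (no_types, lifting) UN_least card_mono mem_Collect_eq)
  then have "real (card Good) * real n ^ k \<le> real (card (cell_set G lam X b (Branch \<sigma> j \<tau>)))"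
    by (metis of_nat_le_iff of_nat_mult of_nat_power)
  then show ?thesis using mult_right_mono[OF good, of "real n ^ k"] unfolding k_def by simp
qed

end

lemma card_cell_bounds:
  assumes t: "tree_plan G lam" and c: "c \<in> cell_types G (length b)"
    and ne: "\<exists>x\<in>Gamma_set G lam {1..n}. in_cell b c x"
  shows "card (cell_set G lam {1..n} b c) \<le> n ^ cell_exp lam c" "1 \<le> card (cell_set G lam {1..n} b c)"
    "1 \<le> cell_exp lam c \<Longrightarrow>
       real n ^ cell_exp lam c - real (Suc (length b)) * real n ^ (cell_exp lam c - 1)
         \<le> real (card (cell_set G lam {1..n} b c))"
proof -
  have "finite (cell_set G lam {1..n} b c)"
    using card_Gamma_set[OF t, of "{1..n}"] unfolding cell_set_def by auto
  then show "1 \<le> card (cell_set G lam {1..n} b c)"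
    using ne unfolding cell_set_def by (metis (no_types, lifting) One_nat_def Suc_leI card_gt_0_iff empty_iff mem_Collect_eq)
  let ?C = "card (cell_set G lam {1..n} b c)" and ?e = "cell_exp lam c"
  have "?C \<le> n ^ ?e \<and> real n ^ ?e - real (Suc (length b)) * real n ^ (?e - 1) \<le> real ?C"
  proof (cases c)
    case (Point j \<tau>)
    then show ?thesis using card_point_cell_le[of G lam "{1..n}" b j \<tau>] \<open>1 \<le> ?C\<close> by simp
  next
    case (Branch \<sigma> j \<tau>)
    obtain x0 where x0: "x0 \<in> Gamma_set G lam {1..n}" "in_cell b (Branch \<sigma> j \<tau>) x0" using ne Branch by auto
    have "j \<le> length b" using c Branch unfolding cell_types_def by auto
    then interpret branch_cell G lam "{1..n}" b \<sigma> j \<tau> x0 by unfold_locales (use t x0 in auto)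
    have e: "?e = infty_count lam (length base) \<sigma>" using Branch length_base by simp
    have "real n ^ ?e - real (Suc (length b)) * real n ^ (?e - 1) \<le> real ?C"
    proof (cases "lam (take (Suc (length base)) \<sigma>) = Infty")
      case True
      then have "real n ^ ?e - real (Suc (length b)) * real n ^ (?e - 1) =
          (real n - real (Suc (length b))) * real n ^ infty_count lam (Suc (length base)) \<sigma>"
        unfolding e infty_count_base by (simp add: algebra_simps)
      then show ?thesis using card_branch_cell_ge_Infty[OF True refl] Branch by simp
    next
      case False
      then have "n ^ ?e \<le> ?C" using card_branch_cell_ge_One e Branch by simp
      then have "real n ^ ?e \<le> real ?C" by (metis of_nat_le_iff of_nat_power)
      moreover have "0 \<le> real (Suc (length b)) * real n ^ (?e - 1)" by simp
      ultimately show ?thesis by linarith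
    qed
    then show ?thesis using card_branch_cell_le Branch by (simp add: length_base)
  qed
  then show "?C \<le> n ^ ?e" "1 \<le> ?e \<Longrightarrow> real n ^ ?e - real (Suc (length b)) * real n ^ (?e - 1) \<le> real ?C"
    by auto
qed

section \<open>Definable sets are unions of cells\<close>

definition met_cells ::
    "nat list set \<Rightarrow> (nat list \<Rightarrow> label) \<Rightarrow> nat set \<Rightarrow> fm \<Rightarrow> (nat \<times> nat option) list list \<Rightarrow> cell set" where
  "met_cells G lam X \<phi> b = {c \<in> cell_types G (length b). \<exists>x\<in>Gamma_set G lam X. in_cell b c x \<and>
     sat (Gamma_struct G lam X) (env (Gamma_struct G lam X) x b) \<phi>}"

lemma def_set_eq_Union_cells:
  assumes t: "tree_plan G lam" and b: "set b \<subseteq> Gamma_set G lam X" and \<phi>: "in_lang G \<phi>"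
  shows "def_set (Gamma_struct G lam X) \<phi> b = (\<Union>c\<in>met_cells G lam X \<phi> b. cell_set G lam X b c)"
proof (intro equalityI subsetI)
  fix x assume "x \<in> def_set (Gamma_struct G lam X) \<phi> b"
  then have x: "x \<in> Gamma_set G lam X" "sat (Gamma_struct G lam X) (env (Gamma_struct G lam X) x b) \<phi>"
    unfolding def_set_def Gamma_struct_simps by auto
  then obtain c where "c \<in> cell_types G (length b)" "in_cell b c x" using in_cell_exists[OF t] by blast
  then show "x \<in> (\<Union>c\<in>met_cells G lam X \<phi> b. cell_set G lam X b c)"
    using x unfolding met_cells_def cell_set_def by auto
next
  fix x assume "x \<in> (\<Union>c\<in>met_cells G lam X \<phi> b. cell_set G lam X b c)"
  then obtain c x' where "x \<in> Gamma_set G lam X" "in_cell b c x"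
    "x' \<in> Gamma_set G lam X" "in_cell b c x'" "sat (Gamma_struct G lam X) (env (Gamma_struct G lam X) x' b) \<phi>"
    unfolding met_cells_def cell_set_def by auto
  then show "x \<in> def_set (Gamma_struct G lam X) \<phi> b"
    using sat_in_cell_iff[OF t b _ _ _ _ \<phi>] unfolding def_set_def Gamma_struct_simps by blast
qed

lemma card_def_set_eq_sum_cells:
  assumes t: "tree_plan G lam" and X: "finite X" and b: "set b \<subseteq> Gamma_set G lam X" and \<phi>: "in_lang G \<phi>"
  shows "card (def_set (Gamma_struct G lam X) \<phi> b) = (\<Sum>c\<in>met_cells G lam X \<phi> b. card (cell_set G lam X b c))"
  unfolding def_set_eq_Union_cells[OF t b \<phi>]
proof (rule card_UN_disjoint)
  have "finite G" using t unfolding tree_plan_def by simp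
  then have "finite (cell_types G (length b))" by (rule finite_cell_types)
  then show "finite (met_cells G lam X \<phi> b)" unfolding met_cells_def by simp
  show "\<forall>c\<in>met_cells G lam X \<phi> b. finite (cell_set G lam X b c)"
    using card_Gamma_set[OF t X] unfolding cell_set_def by auto
  show "\<forall>c\<in>met_cells G lam X \<phi> b. \<forall>c'\<in>met_cells G lam X \<phi> b. c \<noteq> c' \<longrightarrow>
      cell_set G lam X b c \<inter> cell_set G lam X b c' = {}"
    using in_cell_unique unfolding met_cells_def cell_set_def by blast
qed

fun conj_list :: "fm list \<Rightarrow> fm" where
  "conj_list [] = FNot FFalse"
| "conj_list (p # ps) = FAnd p (conj_list ps)"

lemma sat_conj_list_map: "sat A e (conj_list (map f xs)) \<longleftrightarrow> (\<forall>x\<in>set xs. sat A e (f x))"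
  by (induction xs) auto

lemma fv_conj_list: "fv (conj_list ps) = (\<Union>p\<in>set ps. fv p)"
  by (induction ps) auto

lemma in_lang_conj_list: "in_lang G (conj_list ps) \<longleftrightarrow> (\<forall>p\<in>set ps. in_lang G p)"
  by (induction ps) auto

definition param_tm :: "nat \<Rightarrow> tm" where
  "param_tm j = (if j = 0 then Root else Var j)"

definition meet_tm :: "nat \<Rightarrow> tm" where
  "meet_tm j = Meet (Var 0) (param_tm j)"

fun cell_fm :: "nat \<Rightarrow> cell \<Rightarrow> fm" where
  "cell_fm m (Branch \<sigma> j \<tau>) = FAnd (FP \<sigma> (Var 0)) (FAnd (FP \<tau> (meet_tm j))
     (FAnd (conj_list (map (\<lambda>j'. FLe (meet_tm j') (meet_tm j)) [0..<Suc m]))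
       (FAnd (conj_list (map (\<lambda>j'. FNot (FEq (meet_tm j') (meet_tm j))) [0..<j]))
         (FNot (FEq (Var 0) (meet_tm j))))))"
| "cell_fm m (Point j \<tau>) = FAnd (FLe (Var 0) (param_tm j)) (FAnd (FP \<tau> (Var 0))
     (conj_list (map (\<lambda>j'. FNot (FLe (Var 0) (param_tm j'))) [0..<j])))"

lemma fv_cell_fm: "c \<in> cell_types G m \<Longrightarrow> fv (cell_fm m c) \<subseteq> {..m}"
  unfolding cell_types_def by (auto simp: fv_conj_list meet_tm_def param_tm_def split: if_splits)

lemma in_lang_cell_fm: "c \<in> cell_types G m \<Longrightarrow> in_lang G (cell_fm m c)"
  unfolding cell_types_def by (auto simp: in_lang_conj_list)

lemma sat_cell_fm:
  assumes "c \<in> cell_types G (length b)"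
  shows "sat (Gamma_struct G lam X) (env (Gamma_struct G lam X) x b) (cell_fm (length b) c) \<longleftrightarrow> in_cell b c x"
proof -
  have "eval_tm (Gamma_struct G lam X) (env (Gamma_struct G lam X) x b) (param_tm j) = param b j"
    if "j \<le> length b" for j
    using that unfolding param_tm_def param_def env_def by (auto simp: Gamma_struct_simps)
  then have "eval_tm (Gamma_struct G lam X) (env (Gamma_struct G lam X) x b) (meet_tm j) = lcp x (param b j)"
    if "j \<le> length b" for j
    using that unfolding meet_tm_def by (simp add: Gamma_struct_simps env_def)
  moreover note \<open>\<And>j. j \<le> length b \<Longrightarrow> eval_tm _ _ (param_tm j) = param b j\<close>
  ultimately show ?thesis using assms unfolding cell_types_def
    by (auto simp: sat_conj_list_map Gamma_struct_simps env_def less_Suc_eq_le simp del: upt_Suc)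
qed

definition meets_cell_fm :: "nat \<Rightarrow> fm \<Rightarrow> cell \<Rightarrow> fm" where
  "meets_cell_fm m \<phi> c = FEx 0 (FAnd (cell_fm m c) \<phi>)"

definition cells_met_fm :: "nat \<Rightarrow> fm \<Rightarrow> cell list \<Rightarrow> cell set \<Rightarrow> fm" where
  "cells_met_fm m \<phi> R S =
     conj_list (map (\<lambda>c. if c \<in> S then meets_cell_fm m \<phi> c else FNot (meets_cell_fm m \<phi> c)) R)"

lemma fv_cells_met_fm:
  assumes "set R = cell_types G m" "fv \<phi> \<subseteq> {..m}"
  shows "fv (cells_met_fm m \<phi> R S) \<subseteq> {1..m}"
proof -
  have "fv (meets_cell_fm m \<phi> c) \<subseteq> {1..m}" if "c \<in> cell_types G m" for c
    using fv_cell_fm[OF that] assms(2) unfolding meets_cell_fm_def by auto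
  then show ?thesis unfolding cells_met_fm_def using assms(1) by (auto simp: fv_conj_list split: if_splits)
qed

lemma in_lang_cells_met_fm:
  "set R = cell_types G m \<Longrightarrow> in_lang G \<phi> \<Longrightarrow> in_lang G (cells_met_fm m \<phi> R S)"
  unfolding cells_met_fm_def meets_cell_fm_def using in_lang_cell_fm by (auto simp: in_lang_conj_list)

lemma holds_cells_met_fm_iff:
  assumes R: "set R = cell_types G (length b)" and S: "S \<subseteq> cell_types G (length b)"
  shows "holds_y (Gamma_struct G lam X) (cells_met_fm (length b) \<phi> R S) b \<longleftrightarrow> S = met_cells G lam X \<phi> b"
proof -
  have "sat (Gamma_struct G lam X) (env (Gamma_struct G lam X) [] b) (meets_cell_fm (length b) \<phi> c) \<longleftrightarrow>
      c \<in> met_cells G lam X \<phi> b" if "c \<in> cell_types G (length b)" for c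
  proof -
    have "(env A r b)(0 := a) = env A a b" for A :: "(nat \<times> nat option) list tstruct" and r a
      by (auto simp: env_def fun_eq_iff)
    then show ?thesis using that sat_cell_fm[OF that]
      unfolding meets_cell_fm_def met_cells_def by (auto simp: Gamma_struct_simps)
  qed
  then have "holds_y (Gamma_struct G lam X) (cells_met_fm (length b) \<phi> R S) b \<longleftrightarrow>
      (\<forall>c\<in>cell_types G (length b). c \<in> S \<longleftrightarrow> c \<in> met_cells G lam X \<phi> b)"
    unfolding holds_y_def cells_met_fm_def sat_conj_list_map Gamma_struct_simps R by auto
  moreover have "met_cells G lam X \<phi> b \<subseteq> cell_types G (length b)" unfolding met_cells_def by auto
  ultimately show ?thesis using S by blast
qed

section \<open>Counting the solutions of a formula\<close>

lemma sum_card_estimate: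
  fixes f e :: "'c \<Rightarrow> nat" and n K :: nat and a :: real
  assumes S: "finite S" and n: "1 \<le> n" and a: "0 \<le> a" and K: "1 \<le> K"
    and up: "\<And>c. c \<in> S \<Longrightarrow> f c \<le> n ^ e c"
    and lo: "\<And>c. c \<in> S \<Longrightarrow> 1 \<le> e c \<Longrightarrow> real n ^ e c - a * real n ^ (e c - 1) \<le> real (f c)"
    and le: "\<And>c. c \<in> S \<Longrightarrow> e c \<le> K"
  shows "\<bar>real (\<Sum>c\<in>S. f c) - real (card {c\<in>S. e c = K}) * real n ^ K\<bar> \<le> real (card S) * (a + 1) * real n ^ (K - 1)"
proof -
  have each: "\<bar>real (f c) - (if e c = K then real n ^ K else 0)\<bar> \<le> (a + 1) * real n ^ (K - 1)" if c: "c \<in> S" for c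
  proof (cases "e c = K")
    case True
    have "real (f c) \<le> real n ^ K" using up[OF c] True by (metis of_nat_le_iff of_nat_power)
    moreover have "real n ^ K - a * real n ^ (K - 1) \<le> real (f c)" using lo[OF c] True K by simp
    moreover have "0 \<le> real n ^ (K - 1)" by simp
    ultimately show ?thesis using True by (simp only: abs_le_iff distrib_right mult_1 if_True refl) linarith
  next
    case False
    then have "real n ^ e c \<le> real n ^ (K - 1)" using le[OF c] n by (intro power_increasing) auto
    moreover have "real (f c) \<le> real n ^ e c" using up[OF c] by (metis of_nat_le_iff of_nat_power)
    moreover have "0 \<le> a * real n ^ (K - 1)" using a by simp
    moreover have "0 \<le> real (f c)" by simp
    moreover have "(a + 1) * real n ^ (K - 1) = a * real n ^ (K - 1) + real n ^ (K - 1)"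
      by (simp add: algebra_simps)
    ultimately show ?thesis using False by (simp only: if_False diff_0_right)
  qed
  have "real (card {c\<in>S. e c = K}) * real n ^ K = (\<Sum>c\<in>S. if e c = K then real n ^ K else 0)"
    using sum.inter_filter[OF S, of "\<lambda>_. real n ^ K" "\<lambda>c. e c = K"] by simp
  then have "\<bar>real (\<Sum>c\<in>S. f c) - real (card {c\<in>S. e c = K}) * real n ^ K\<bar> =
      \<bar>\<Sum>c\<in>S. real (f c) - (if e c = K then real n ^ K else 0)\<bar>"
    by (simp add: sum_subtractf)
  also have "\<dots> \<le> (\<Sum>c\<in>S. (a + 1) * real n ^ (K - 1))"
    using each by (intro order_trans[OF sum_abs] sum_mono)
  finally show ?thesis by simp
qed

definition top_exp :: "(nat list \<Rightarrow> label) \<Rightarrow> cell set \<Rightarrow> nat" where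
  "top_exp lam S = Max (insert 0 (cell_exp lam ` S))"

definition top_count :: "(nat list \<Rightarrow> label) \<Rightarrow> cell set \<Rightarrow> nat" where
  "top_count lam S = card {c\<in>S. cell_exp lam c = top_exp lam S}"

lemma top_count_pos:
  assumes "finite S" "top_exp lam S \<noteq> 0"
  shows "0 < top_count lam S"
proof -
  have "top_exp lam S \<in> insert 0 (cell_exp lam ` S)" unfolding top_exp_def using assms(1) by (intro Max_in) auto
  then obtain c where "c \<in> S" "cell_exp lam c = top_exp lam S" using assms(2) by auto
  then show ?thesis unfolding top_count_def using assms(1) by (auto simp: card_gt_0_iff)
qed

lemma card_def_set_estimate:
  assumes t: "tree_plan G lam" and n: "1 \<le> n" and b: "set b \<subseteq> Gamma_set G lam {1..n}"
    and \<phi>: "in_lang G \<phi>" and S: "S = met_cells G lam {1..n} \<phi> b"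
  shows "top_exp lam S = 0 \<Longrightarrow> card (def_set (Gamma_struct G lam {1..n}) \<phi> b) = top_count lam S"
    and "1 \<le> top_exp lam S \<Longrightarrow>
      \<bar>real (card (def_set (Gamma_struct G lam {1..n}) \<phi> b)) - real (top_count lam S) * real n ^ top_exp lam S\<bar>
        \<le> real (card (cell_types G (length b))) * (real (length b) + 2) * real n ^ (top_exp lam S - 1)"
proof -
  let ?C = "\<lambda>c. card (cell_set G lam {1..n} b c)"
  have card: "card (def_set (Gamma_struct G lam {1..n}) \<phi> b) = (\<Sum>c\<in>S. ?C c)"
    using card_def_set_eq_sum_cells[OF t _ b \<phi>] S by simp
  have fG: "finite G" using t unfolding tree_plan_def by simp
  have sub: "S \<subseteq> cell_types G (length b)" using S unfolding met_cells_def by auto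
  then have fS: "finite S" using finite_cell_types[OF fG] finite_subset by blast
  have bounds: "?C c \<le> n ^ cell_exp lam c" "1 \<le> ?C c"
    "1 \<le> cell_exp lam c \<Longrightarrow> real n ^ cell_exp lam c - real (Suc (length b)) * real n ^ (cell_exp lam c - 1) \<le> real (?C c)"
    if "c \<in> S" for c
    using card_cell_bounds[OF t, of c b n] that sub S unfolding met_cells_def by auto
  have le: "cell_exp lam c \<le> top_exp lam S" if "c \<in> S" for c
    unfolding top_exp_def using fS that by (intro Max_ge) auto
  show "card (def_set (Gamma_struct G lam {1..n}) \<phi> b) = top_count lam S" if "top_exp lam S = 0"
  proof -
    have "?C c = 1" if "c \<in> S" for c using bounds[OF that] le[OF that] \<open>top_exp lam S = 0\<close> by simp
    moreover have "{c\<in>S. cell_exp lam c = top_exp lam S} = S" using le that by auto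
    ultimately show ?thesis unfolding card top_count_def by simp
  qed
  assume K: "1 \<le> top_exp lam S"
  have "card S \<le> card (cell_types G (length b))" using card_mono[OF finite_cell_types[OF fG] sub] .
  then have "real (card S) * (real (Suc (length b)) + 1) \<le> real (card (cell_types G (length b))) * (real (length b) + 2)"
    by (intro mult_mono) auto
  then show "\<bar>real (card (def_set (Gamma_struct G lam {1..n}) \<phi> b)) - real (top_count lam S) * real n ^ top_exp lam S\<bar>
        \<le> real (card (cell_types G (length b))) * (real (length b) + 2) * real n ^ (top_exp lam S - 1)"
    using sum_card_estimate[OF fS n _ K, where f = ?C and e = "cell_exp lam" and a = "real (Suc (length b))"]
      bounds le
    unfolding card top_count_def by (smt (verit) mult_right_mono zero_le_power of_nat_0_le_iff)
qed

lemma sum_powers_div_power_tendsto: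
  fixes e :: "'a \<Rightarrow> nat"
  assumes fG: "finite G" and le: "\<forall>\<sigma>\<in>G. e \<sigma> \<le> D"
  shows "((\<lambda>n. real (\<Sum>\<sigma>\<in>G. n ^ e \<sigma>) / real n ^ D) \<longlongrightarrow> real (card {\<sigma>\<in>G. e \<sigma> = D})) sequentially"
proof -
  have "((\<lambda>n. real n ^ e \<sigma> / real n ^ D) \<longlongrightarrow> (if e \<sigma> = D then 1 else 0)) sequentially" if "\<sigma> \<in> G" for \<sigma>
  proof (cases "e \<sigma> = D")
    case True
    have "eventually (\<lambda>n. real n ^ e \<sigma> / real n ^ D = 1) sequentially"
      using eventually_gt_at_top[of 0] by eventually_elim (use True in simp)
    then show ?thesis using True by (simp add: tendsto_eventually)
  next
    case False
    then have lt: "0 < D - e \<sigma>" using le that by fastforce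
    have "eventually (\<lambda>n. inverse (real n ^ (D - e \<sigma>)) = real n ^ e \<sigma> / real n ^ D) sequentially"
      using eventually_gt_at_top[of 0]
    proof eventually_elim
      case (elim n)
      have "real n ^ D = real n ^ e \<sigma> * real n ^ (D - e \<sigma>)" using le that by (simp flip: power_add)
      then show ?case using elim by (simp add: field_simps)
    qed
    moreover have "((\<lambda>n. inverse (real n ^ (D - e \<sigma>))) \<longlongrightarrow> 0) sequentially"
      by (rule tendsto_inverse_0_at_top, rule filterlim_pow_at_top[OF lt filterlim_real_sequentially])
    ultimately show ?thesis using False tendsto_cong by fastforce
  qed
  then have "((\<lambda>n. \<Sum>\<sigma>\<in>G. real n ^ e \<sigma> / real n ^ D) \<longlongrightarrow> (\<Sum>\<sigma>\<in>G. if e \<sigma> = D then 1 else 0)) sequentially"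
    by (rule tendsto_sum)
  moreover have "(\<Sum>\<sigma>\<in>G. if e \<sigma> = D then 1 else 0 :: real) = real (card {\<sigma>\<in>G. e \<sigma> = D})"
    using fG by (simp add: sum.If_cases Int_def)
  ultimately show ?thesis by (simp add: sum_divide_distrib)
qed

lemma abs_diff_le_if_ratio_close:
  fixes F c P w L a \<epsilon> :: real
  assumes P: "0 < P" and L: "0 < L" and c: "0 \<le> c" and F: "\<bar>F - c * P\<bar> \<le> a * P"
    and small: "a + c * \<bar>1 - w / L\<bar> \<le> \<epsilon> * L / 2" and w: "L / 2 \<le> w" and \<epsilon>: "0 \<le> \<epsilon>"
  shows "\<bar>F - c / L * (w * P)\<bar> \<le> \<epsilon> * (w * P)"
proof -
  have "c * P - c / L * (w * P) = c * (1 - w / L) * P" using L by (simp add: algebra_simps)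
  then have cP: "\<bar>c * P - c / L * (w * P)\<bar> = c * \<bar>1 - w / L\<bar> * P" using P c by (simp add: abs_mult)
  have "\<bar>F - c / L * (w * P)\<bar> \<le> \<bar>F - c * P\<bar> + \<bar>c * P - c / L * (w * P)\<bar>"
    by (rule order_trans[OF _ abs_triangle_ineq]) simp
  also have "\<dots> \<le> (a + c * \<bar>1 - w / L\<bar>) * P" using F cP by (simp add: algebra_simps)
  also have "\<dots> \<le> \<epsilon> * L / 2 * P" using small P by (intro mult_right_mono) auto
  also have "\<dots> = \<epsilon> * (L / 2 * P)" by simp
  also have "\<dots> \<le> \<epsilon> * (w * P)" using w P \<epsilon> by (intro mult_left_mono mult_right_mono) auto
  finally show ?thesis .
qed

lemma powr_approximation:
  fixes Q :: "nat \<Rightarrow> real" and L B \<epsilon> :: real and K D c :: nat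
  assumes lim: "((\<lambda>n. Q n / real n ^ D) \<longlongrightarrow> L) sequentially" and L: "0 < L"
    and Q: "\<And>n. 1 \<le> n \<Longrightarrow> 0 < Q n" and D: "1 \<le> D" and B: "0 \<le> B" and \<epsilon>: "0 < \<epsilon>"
  shows "\<exists>N0. \<forall>n\<ge>N0. \<forall>F. (K = 0 \<longrightarrow> F = real c) \<longrightarrow>
      (1 \<le> K \<longrightarrow> \<bar>F - real c * real n ^ K\<bar> \<le> B * real n ^ (K - 1)) \<longrightarrow>
      \<bar>F - real c / L powr (real K / real D) * Q n powr (real K / real D)\<bar> \<le> \<epsilon> * Q n powr (real K / real D)"
proof (cases "K = 0")
  case True
  then show ?thesis using \<epsilon> L Q by (intro exI[of _ 1]) (auto simp: less_imp_neq[symmetric])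
next
  case False
  define d where "d = real K / real D"
  define Ld where "Ld = L powr d"
  define w where "w n = (Q n / real n ^ D) powr d" for n
  have Ld: "0 < Ld" unfolding Ld_def using L by simp
  have Qw: "Q n powr d = w n * real n ^ K" if n: "1 \<le> n" for n
  proof -
    have "Q n = Q n / real n ^ D * real n ^ D" using n by simp
    then have "Q n powr d = w n * (real n ^ D) powr d"
      unfolding w_def using Q[OF n] by (metis powr_mult divide_nonneg_nonneg less_imp_le zero_le_power of_nat_0_le_iff)
    also have "(real n ^ D) powr d = real n powr (real D * d)"
      using n by (simp add: powr_realpow[symmetric] powr_powr)
    also have "\<dots> = real n ^ K" unfolding d_def using n D by (simp add: powr_realpow)
    finally show ?thesis .
  qed
  have wlim: "(w \<longlongrightarrow> Ld) sequentially"
    unfolding w_def Ld_def by (rule tendsto_powr[OF lim tendsto_const]) (use L in simp)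
  have "((\<lambda>n. B / real n + real c * \<bar>1 - w n / Ld\<bar>) \<longlongrightarrow> 0 + real c * \<bar>1 - Ld / Ld\<bar>) sequentially"
    using Ld by (intro tendsto_intros wlim tendsto_divide_0[OF tendsto_const]
        filterlim_at_top_imp_at_infinity[OF filterlim_real_sequentially]) auto
  then have "eventually (\<lambda>n. B / real n + real c * \<bar>1 - w n / Ld\<bar> < \<epsilon> * Ld / 2) sequentially"
    using Ld \<epsilon> by (intro order_tendstoD(2)) auto
  moreover have "eventually (\<lambda>n. Ld / 2 < w n) sequentially"
    using Ld by (intro order_tendstoD(1)[OF wlim]) auto
  ultimately have "eventually (\<lambda>n. B / real n + real c * \<bar>1 - w n / Ld\<bar> < \<epsilon> * Ld / 2 \<and> Ld / 2 < w n \<and> 1 \<le> n)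
      sequentially"
    using eventually_ge_at_top[of "1::nat"] by eventually_elim auto
  then obtain N0 where N0: "\<And>n. N0 \<le> n \<Longrightarrow>
      B / real n + real c * \<bar>1 - w n / Ld\<bar> < \<epsilon> * Ld / 2 \<and> Ld / 2 < w n \<and> 1 \<le> n"
    unfolding eventually_sequentially by blast
  have "\<bar>F - real c / Ld * Q n powr d\<bar> \<le> \<epsilon> * Q n powr d"
    if n: "N0 \<le> n" and F: "\<bar>F - real c * real n ^ K\<bar> \<le> B * real n ^ (K - 1)" for n F
  proof -
    have n1: "1 \<le> n" using N0[OF n] by simp
    have "B * real n ^ (K - 1) = B / real n * real n ^ K"
      using n1 False by (simp add: power_eq_if field_simps)
    then show ?thesis unfolding Qw[OF n1] using F N0[OF n] Ld \<epsilon> n1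
      by (intro abs_diff_le_if_ratio_close[where a = "B / real n"]) auto
  qed
  then show ?thesis using False unfolding d_def Ld_def by (intro exI[of _ N0]) auto
qed

section \<open>The class \<open>\<K>(\<Gamma>)\<close>\<close>

lemma infty_count_le_plan_degree: "tree_plan G lam \<Longrightarrow> \<sigma> \<in> G \<Longrightarrow> infty_count lam 0 \<sigma> \<le> plan_degree G lam"
  unfolding plan_degree_def tree_plan_def by simp

lemma plan_degree_attained:
  assumes "tree_plan G lam"
  obtains \<sigma> where "\<sigma> \<in> G" "infty_count lam 0 \<sigma> = plan_degree G lam"
proof -
  have "plan_degree G lam \<in> infty_count lam 0 ` G"
    using assms unfolding plan_degree_def tree_plan_def by (intro Max_in) auto
  then show ?thesis using that by auto
qed

lemma plan_leading_pos:
  assumes t: "tree_plan G lam"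
  shows "0 < plan_leading G lam"
proof -
  obtain \<sigma> where "\<sigma> \<in> G" "infty_count lam 0 \<sigma> = plan_degree G lam" using plan_degree_attained[OF t] .
  moreover have "finite G" using t unfolding tree_plan_def by simp
  ultimately show ?thesis unfolding plan_leading_def by (auto simp: card_gt_0_iff)
qed

lemma plan_degree_pos:
  assumes t: "tree_plan G lam" and ex: "\<exists>\<sigma>\<in>G. lam \<sigma> = Infty"
  shows "1 \<le> plan_degree G lam"
proof -
  obtain \<sigma> where \<sigma>: "\<sigma> \<in> G" "lam \<sigma> = Infty" using ex by blast
  then have "\<sigma> \<noteq> []" using t unfolding tree_plan_def by auto
  then have "length \<sigma> \<in> {k. 0 < k \<and> k \<le> length \<sigma> \<and> lam (take k \<sigma>) = Infty}" using \<sigma> by simp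
  then have "1 \<le> infty_count lam 0 \<sigma>"
    unfolding infty_count_def by (metis (no_types, lifting) One_nat_def Suc_leI card_gt_0_iff empty_iff
        finite_nat_set_iff_bounded_le mem_Collect_eq)
  then show ?thesis using infty_count_le_plan_degree[OF t \<sigma>(1)] by simp
qed

lemma card_Gamma_set_bounds:
  assumes t: "tree_plan G lam" and n: "1 \<le> n"
  shows "n ^ plan_degree G lam \<le> card (Gamma_set G lam {1..n})"
    and "card (Gamma_set G lam {1..n}) \<le> card G * n ^ plan_degree G lam"
proof -
  have fG: "finite G" using t unfolding tree_plan_def by simp
  obtain \<sigma> where "\<sigma> \<in> G" "infty_count lam 0 \<sigma> = plan_degree G lam" using plan_degree_attained[OF t] .
  then show "n ^ plan_degree G lam \<le> card (Gamma_set G lam {1..n})"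
    unfolding card_Gamma_set_atLeastAtMost[OF t]
    using member_le_sum[of \<sigma> G "\<lambda>\<sigma>. n ^ infty_count lam 0 \<sigma>"] fG by simp
  have "(\<Sum>\<sigma>\<in>G. n ^ infty_count lam 0 \<sigma>) \<le> (\<Sum>\<sigma>\<in>G. n ^ plan_degree G lam)"
    using n infty_count_le_plan_degree[OF t] by (intro sum_mono power_increasing) auto
  then show "card (Gamma_set G lam {1..n}) \<le> card G * n ^ plan_degree G lam"
    unfolding card_Gamma_set_atLeastAtMost[OF t] by simp
qed

lemma card_Gamma_set_tendsto:
  assumes t: "tree_plan G lam"
  shows "((\<lambda>n. real (card (Gamma_set G lam {1..n})) / real n ^ plan_degree G lam) \<longlongrightarrow> real (plan_leading G lam))
    sequentially"
  using sum_powers_div_power_tendsto[of G "infty_count lam 0" "plan_degree G lam"] t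
    infty_count_le_plan_degree[OF t]
  unfolding card_Gamma_set_atLeastAtMost[OF t] plan_leading_def tree_plan_def by simp

lemma Gamma_struct_in_K_class:
  assumes t: "tree_plan G lam" and n: "1 \<le> n"
  shows "Gamma_struct G lam {1..n} \<in> K_class G lam"
proof -
  have "finite (carrier (Gamma_struct G lam {1..n}))"
    using card_Gamma_set[OF t, of "{1..n}"] by (simp add: Gamma_struct_simps)
  then show ?thesis using closed_Gamma_struct[OF t] iso_map_id n
    unfolding K_class_def iso_struct_iff by blast
qed

lemma K_class_cells_met_fm:
  assumes t: "tree_plan G lam" and A: "A \<in> K_class G lam" and b: "b \<in> tuples A m"
    and \<phi>: "in_lang G \<phi>" and R: "set R = cell_types G m"
  obtains n b' where "1 \<le> n" "set b' \<subseteq> Gamma_set G lam {1..n}" "length b' = m"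
    "card (carrier A) = card (Gamma_set G lam {1..n})"
    "card (def_set A \<phi> b) = card (def_set (Gamma_struct G lam {1..n}) \<phi> b')"
    "\<And>S. S \<subseteq> cell_types G m \<Longrightarrow>
       holds_y A (cells_met_fm m \<phi> R S) b \<longleftrightarrow> S = met_cells G lam {1..n} \<phi> b'"
proof -
  obtain n h where n: "1 \<le> n" and iso: "struct_iso G A (Gamma_struct G lam {1..n}) h"
    using A unfolding K_class_def iso_struct_iff struct_iso_def by blast
  interpret struct_iso G A "Gamma_struct G lam {1..n}" h by (rule iso)
  have "map h b \<in> tuples (Gamma_struct G lam {1..n}) m" by (rule tuples_map[OF b])
  then have b': "set (map h b) \<subseteq> Gamma_set G lam {1..n}" "length (map h b) = m"
    unfolding tuples_def Gamma_struct_simps by auto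
  have "holds_y A (cells_met_fm m \<phi> R S) b \<longleftrightarrow> S = met_cells G lam {1..n} \<phi> (map h b)"
    if "S \<subseteq> cell_types G m" for S
    using holds_y_iff[OF b in_lang_cells_met_fm[OF R \<phi>]] holds_cells_met_fm_iff[where R = R and b = "map h b"] R that b'(2)
    by simp
  then show ?thesis using that[OF n b'] card_carrier card_def_set[OF b \<phi>] by (simp add: Gamma_struct_simps)
qed

section \<open>\<open>\<K>(\<Gamma>)\<close> is an asymptotic class of dimension \<open>deg P(\<Gamma>;x)\<close>\<close>

definition cell_list :: "nat list set \<Rightarrow> nat \<Rightarrow> cell list" where
  "cell_list G m = (SOME R. set R = cell_types G m)"

lemma set_cell_list: "finite G \<Longrightarrow> set (cell_list G m) = cell_types G m"
  unfolding cell_list_def by (rule someI_ex) (use finite_list finite_cell_types in blast)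

definition cell_subsets :: "nat list set \<Rightarrow> nat \<Rightarrow> cell set list" where
  "cell_subsets G m = remdups (map set (subseqs (cell_list G m)))"

lemma set_cell_subsets: "finite G \<Longrightarrow> set (cell_subsets G m) = Pow (cell_types G m)"
  unfolding cell_subsets_def using subseqs_powset set_cell_list by (metis set_map set_remdups)

text \<open>The table required by the definition of an asymptotic class, with one entry for each set \<open>S\<close>
  of cell types: the formula saying that \<open>\<phi>(x, b)\<close> meets exactly the cells in \<open>S\<close>, and the
  dimension and measure read off from the number \<open>c n\<^sup>K + O(n\<^sup>K\<^sup>-\<^sup>1)\<close> of solutions.\<close>

definition cell_table :: "nat list set \<Rightarrow> (nat list \<Rightarrow> label) \<Rightarrow> fm \<Rightarrow> nat \<Rightarrow> (real \<times> real \<times> fm) list" where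
  "cell_table G lam \<phi> m = map (\<lambda>S.
     (real (top_exp lam S) / real (plan_degree G lam),
      real (top_count lam S) / real (plan_leading G lam) powr (real (top_exp lam S) / real (plan_degree G lam)),
      cells_met_fm m \<phi> (cell_list G m) S)) (cell_subsets G m)"

lemma top_exp_le_plan_degree:
  assumes "finite G" "S \<subseteq> cell_types G m"
  shows "top_exp lam S \<le> plan_degree G lam"
proof -
  have "finite S" using assms finite_cell_types finite_subset by blast
  then show ?thesis unfolding top_exp_def using assms cell_exp_le_plan_degree by (auto simp: Max_le_iff)
qed

lemma cell_table_entries:
  assumes t: "tree_plan G lam" and \<phi>: "in_lang G \<phi>" "fv \<phi> \<subseteq> {..m}"
  shows "\<forall>(d, \<mu>, \<theta>) \<in> set (cell_table G lam \<phi> m).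
    (\<exists>j\<le>plan_degree G lam. d = real j / real (plan_degree G lam)) \<and> \<mu> \<ge> 0 \<and> (d \<noteq> 0 \<longrightarrow> \<mu> > 0) \<and>
    in_lang G \<theta> \<and> fv \<theta> \<subseteq> {1..m}"
proof -
  have fG: "finite G" using t unfolding tree_plan_def by simp
  have "(\<exists>j\<le>plan_degree G lam. real (top_exp lam S) / real (plan_degree G lam) = real j / real (plan_degree G lam)) \<and>
      0 \<le> real (top_count lam S) / real (plan_leading G lam) powr (real (top_exp lam S) / real (plan_degree G lam)) \<and>
      (real (top_exp lam S) / real (plan_degree G lam) \<noteq> 0 \<longrightarrow>
        0 < real (top_count lam S) / real (plan_leading G lam) powr (real (top_exp lam S) / real (plan_degree G lam))) \<and>
      in_lang G (cells_met_fm m \<phi> (cell_list G m) S) \<and> fv (cells_met_fm m \<phi> (cell_list G m) S) \<subseteq> {1..m}"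
    if "S \<in> set (cell_subsets G m)" for S
  proof (intro conjI impI)
    have S: "S \<subseteq> cell_types G m" using that set_cell_subsets[OF fG] by auto
    show "\<exists>j\<le>plan_degree G lam. real (top_exp lam S) / real (plan_degree G lam) = real j / real (plan_degree G lam)"
      using top_exp_le_plan_degree[OF fG S] by blast
    show "0 \<le> real (top_count lam S) / real (plan_leading G lam) powr (real (top_exp lam S) / real (plan_degree G lam))"
      by simp
    assume "real (top_exp lam S) / real (plan_degree G lam) \<noteq> 0"
    then have "0 < top_count lam S" using top_count_pos finite_subset[OF S finite_cell_types[OF fG]] by auto
    then show "0 < real (top_count lam S) / real (plan_leading G lam) powr (real (top_exp lam S) / real (plan_degree G lam))"
      using plan_leading_pos[OF t] by simp
  qed (use in_lang_cells_met_fm[OF set_cell_list[OF fG] \<phi>(1)] fv_cells_met_fm[OF set_cell_list[OF fG] \<phi>(2)] in auto)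
  then show ?thesis unfolding cell_table_def by auto
qed

lemma cell_table_partition:
  assumes t: "tree_plan G lam" and \<phi>: "in_lang G \<phi>" and A: "A \<in> K_class G lam" and b: "b \<in> tuples A m"
  defines "T \<equiv> cell_table G lam \<phi> m"
  shows "(\<exists>i < length T. holds_y A (snd (snd (T ! i))) b) \<and>
    (\<forall>i < length T. \<forall>j < length T. i \<noteq> j \<longrightarrow>
       \<not> (holds_y A (snd (snd (T ! i))) b \<and> holds_y A (snd (snd (T ! j))) b))"
proof -
  have fG: "finite G" using t unfolding tree_plan_def by simp
  obtain n b' where b': "length b' = m" and
    holds: "\<And>S. S \<subseteq> cell_types G m \<Longrightarrow>
      holds_y A (cells_met_fm m \<phi> (cell_list G m) S) b \<longleftrightarrow> S = met_cells G lam {1..n} \<phi> b'"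
    using K_class_cells_met_fm[OF t A b \<phi> set_cell_list[OF fG]] by metis
  let ?SS = "cell_subsets G m"
  have T: "length T = length ?SS" "\<And>i. i < length ?SS \<Longrightarrow> snd (snd (T ! i)) = cells_met_fm m \<phi> (cell_list G m) (?SS ! i)"
    unfolding T_def cell_table_def by simp_all
  have hold: "holds_y A (snd (snd (T ! i))) b \<longleftrightarrow> ?SS ! i = met_cells G lam {1..n} \<phi> b'" if "i < length ?SS" for i
    using T(2)[OF that] holds nth_mem[OF that] set_cell_subsets[OF fG] by auto
  have "met_cells G lam {1..n} \<phi> b' \<in> set ?SS" using set_cell_subsets[OF fG] b' unfolding met_cells_def by auto
  then obtain i where "i < length ?SS" "?SS ! i = met_cells G lam {1..n} \<phi> b'" by (metis in_set_conv_nth)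
  moreover have "i = j" if "i < length ?SS" "j < length ?SS" "?SS ! i = ?SS ! j" for i j
    using that nth_eq_iff_index_eq[of ?SS] unfolding cell_subsets_def by simp
  ultimately show ?thesis using hold T(1) by auto
qed

lemma cells_met_fm_estimate:
  assumes t: "tree_plan G lam" and ex: "\<exists>\<sigma>\<in>G. lam \<sigma> = Infty" and \<phi>: "in_lang G \<phi>"
    and S: "S \<subseteq> cell_types G m" and \<epsilon>: "0 < \<epsilon>"
  defines "d \<equiv> real (top_exp lam S) / real (plan_degree G lam)"
    and "\<mu> \<equiv> real (top_count lam S) / real (plan_leading G lam) powr
      (real (top_exp lam S) / real (plan_degree G lam))"
  shows "\<exists>M::nat. \<forall>A\<in>K_class G lam. M \<le> card (carrier A) \<longrightarrow>
    (\<forall>b\<in>tuples A m. holds_y A (cells_met_fm m \<phi> (cell_list G m) S) b \<longrightarrow>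
      \<bar>real (card (def_set A \<phi> b)) - \<mu> * real (card (carrier A)) powr d\<bar> \<le> \<epsilon> * real (card (carrier A)) powr d)"
proof -
  have fG: "finite G" using t unfolding tree_plan_def by simp
  define D where "D = plan_degree G lam"
  define B where "B = real (card (cell_types G m)) * (real m + 2)"
  have D: "1 \<le> D" unfolding D_def using plan_degree_pos[OF t ex] .
  have Q: "0 < real (card (Gamma_set G lam {1..n}))" if "1 \<le> n" for n
  proof -
    have "1 \<le> n ^ plan_degree G lam" using that by simp
    then show ?thesis using card_Gamma_set_bounds(1)[OF t that] by linarith
  qed
  obtain N0 where N0: "\<And>n F. N0 \<le> n \<Longrightarrow> (top_exp lam S = 0 \<longrightarrow> F = real (top_count lam S)) \<Longrightarrow>
      (1 \<le> top_exp lam S \<longrightarrow>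
        \<bar>F - real (top_count lam S) * real n ^ top_exp lam S\<bar> \<le> B * real n ^ (top_exp lam S - 1)) \<Longrightarrow>
      \<bar>F - \<mu> * real (card (Gamma_set G lam {1..n})) powr d\<bar> \<le> \<epsilon> * real (card (Gamma_set G lam {1..n})) powr d"
    using powr_approximation[OF card_Gamma_set_tendsto[OF t] _ Q plan_degree_pos[OF t ex] _ \<epsilon>, of B "top_exp lam S" "top_count lam S"]
      plan_leading_pos[OF t] unfolding B_def \<mu>_def d_def by fastforce
  show ?thesis
  proof (intro exI[of _ "card G * (max N0 1) ^ D"] ballI impI)
    fix A b assume A: "A \<in> K_class G lam" and M: "card G * (max N0 1) ^ D \<le> card (carrier A)"
      and b: "b \<in> tuples A m" and h: "holds_y A (cells_met_fm m \<phi> (cell_list G m) S) b"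
    obtain n b' where n: "1 \<le> n" and b': "set b' \<subseteq> Gamma_set G lam {1..n}" "length b' = m"
      and cards: "card (carrier A) = card (Gamma_set G lam {1..n})"
        "card (def_set A \<phi> b) = card (def_set (Gamma_struct G lam {1..n}) \<phi> b')"
      and S_eq: "S = met_cells G lam {1..n} \<phi> b'"
      using K_class_cells_met_fm[OF t A b \<phi> set_cell_list[OF fG]] S h by metis
    have "N0 \<le> n"
    proof (rule ccontr)
      assume "\<not> N0 \<le> n"
      then have "n ^ D < (max N0 1) ^ D" using D by (intro power_strict_mono) auto
      moreover have "0 < card G" using fG t unfolding tree_plan_def by (auto simp: card_gt_0_iff)
      ultimately have "card G * n ^ D < card G * (max N0 1) ^ D" by simp
      then show False using M cards(1) card_Gamma_set_bounds(2)[OF t n] unfolding D_def by linarith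
    qed
    then show "\<bar>real (card (def_set A \<phi> b)) - \<mu> * real (card (carrier A)) powr d\<bar> \<le> \<epsilon> * real (card (carrier A)) powr d"
      using N0 card_def_set_estimate[OF t n b'(1) \<phi> S_eq] b'(2) cards
      unfolding B_def by simp
  qed
qed

lemma asymptotic_class_plan_degree:
  assumes t: "tree_plan G lam" and ex: "\<exists>\<sigma>\<in>G. lam \<sigma> = Infty"
  shows "asymptotic_class (in_lang G) (K_class G lam) (plan_degree G lam)"
proof -
  have fG: "finite G" using t unfolding tree_plan_def by simp
  have estimate: "\<exists>M::nat. \<forall>A\<in>K_class G lam. M \<le> card (carrier A) \<longrightarrow> (\<forall>b\<in>tuples A m.
      holds_y A (snd (snd (cell_table G lam \<phi> m ! i))) b \<longrightarrow>
      \<bar>real (card (def_set A \<phi> b)) - fst (snd (cell_table G lam \<phi> m ! i)) *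
         real (card (carrier A)) powr fst (cell_table G lam \<phi> m ! i)\<bar>
        \<le> \<epsilon> * real (card (carrier A)) powr fst (cell_table G lam \<phi> m ! i))"
    if "in_lang G \<phi>" "i < length (cell_table G lam \<phi> m)" "0 < \<epsilon>" for \<phi> m i \<epsilon>
    using cells_met_fm_estimate[OF t ex that(1) _ that(3), of "cell_subsets G m ! i"] that(2)
      nth_mem[of i "cell_subsets G m"] set_cell_subsets[OF fG]
    unfolding cell_table_def by auto
  show ?thesis unfolding asymptotic_class_def
  proof (intro conjI allI impI)
    show "0 < plan_degree G lam" using plan_degree_pos[OF t ex] by simp
    fix \<phi> m assume \<phi>: "in_lang G \<phi> \<and> fv \<phi> \<subseteq> {..m}"
    show "\<exists>T :: (real \<times> real \<times> fm) list.
      (\<forall>(d, \<mu>, \<theta>) \<in> set T. (\<exists>j\<le>plan_degree G lam. d = real j / real (plan_degree G lam)) \<and>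
         \<mu> \<ge> 0 \<and> (d \<noteq> 0 \<longrightarrow> \<mu> > 0) \<and> in_lang G \<theta> \<and> fv \<theta> \<subseteq> {1..m}) \<and>
      (\<forall>A\<in>K_class G lam. \<forall>b\<in>tuples A m.
         (\<exists>i < length T. holds_y A (snd (snd (T ! i))) b) \<and>
         (\<forall>i < length T. \<forall>j < length T. i \<noteq> j \<longrightarrow>
            \<not> (holds_y A (snd (snd (T ! i))) b \<and> holds_y A (snd (snd (T ! j))) b))) \<and>
      (\<forall>i < length T. \<forall>\<epsilon>::real. \<epsilon> > 0 \<longrightarrow>
         (\<exists>M::nat. \<forall>A\<in>K_class G lam. card (carrier A) \<ge> M \<longrightarrow>
            (\<forall>b\<in>tuples A m. holds_y A (snd (snd (T ! i))) b \<longrightarrow>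
               \<bar>real (card (def_set A \<phi> b)) - fst (snd (T ! i)) * real (card (carrier A)) powr fst (T ! i)\<bar>
                 \<le> \<epsilon> * real (card (carrier A)) powr fst (T ! i))))"
      using cell_table_entries[OF t conjunct1[OF \<phi>] conjunct2[OF \<phi>]]
        cell_table_partition[OF t conjunct1[OF \<phi>]] estimate[OF conjunct1[OF \<phi>]]
      by (intro exI[of _ "cell_table G lam \<phi> m"] conjI) blast+
  qed
qed

section \<open>\<open>\<K>(\<Gamma>)\<close> has no smaller dimension\<close>

lemma exists_infty_count_one:
  assumes t: "tree_plan G lam" and ex: "\<exists>\<sigma>\<in>G. lam \<sigma> = Infty"
  obtains \<sigma> where "\<sigma> \<in> G" "infty_count lam 0 \<sigma> = 1"
proof -
  obtain \<sigma> where \<sigma>: "\<sigma> \<in> G" "lam \<sigma> = Infty" using ex by blast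
  then have "\<sigma> \<noteq> []" using t unfolding tree_plan_def by auto
  then have exk: "\<exists>k. 0 < k \<and> k \<le> length \<sigma> \<and> lam (take k \<sigma>) = Infty" using \<sigma> by (intro exI[of _ "length \<sigma>"]) auto
  define k where "k = (LEAST k. 0 < k \<and> k \<le> length \<sigma> \<and> lam (take k \<sigma>) = Infty)"
  have k: "0 < k" "k \<le> length \<sigma>" "lam (take k \<sigma>) = Infty" using LeastI_ex[OF exk] unfolding k_def by auto
  have "\<not> (0 < k' \<and> k' \<le> length \<sigma> \<and> lam (take k' \<sigma>) = Infty)" if "k' < k" for k'
    using not_less_Least[OF that[unfolded k_def]] unfolding k_def by blast
  then have "{k'. 0 < k' \<and> k' \<le> length (take k \<sigma>) \<and> lam (take k' (take k \<sigma>)) = Infty} = {k}"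
    using k by (auto simp: min_def) (metis nat_less_le)+
  then have "infty_count lam 0 (take k \<sigma>) = 1" unfolding infty_count_def by simp
  then show ?thesis using that tree_plan_take[OF t \<sigma>(1)] by blast
qed

lemma card_def_set_shape:
  assumes t: "tree_plan G lam" and \<sigma>: "\<sigma> \<in> G"
  shows "card (def_set (Gamma_struct G lam {1..n}) (FP \<sigma> (Var 0)) []) = n ^ infty_count lam 0 \<sigma>"
proof -
  have "def_set (Gamma_struct G lam {1..n}) (FP \<sigma> (Var 0)) [] = extensions G lam {1..n} \<sigma> []"
    unfolding def_set_def extensions_def by (auto simp: Gamma_struct_simps env_def)
  then show ?thesis using card_extensions[OF t _ Gamma_set_Nil[OF t] \<sigma>] by simp
qed

lemma power_powr_eq_mult_powr: "0 < x \<Longrightarrow> (x ^ D) powr d = x * x powr (d * real D - 1)"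
proof -
  assume x: "0 < x"
  have "(x ^ D) powr d = x powr (1 + (d * real D - 1))"
    using x by (simp add: powr_realpow[symmetric] powr_powr mult.commute)
  also have "\<dots> = x powr 1 * x powr (d * real D - 1)" by (rule powr_add)
  finally show ?thesis using x by simp
qed

text \<open>For \<open>j = 0\<close> the approximant stays bounded while \<open>n\<close> does not; for \<open>j > 0\<close> it grows at least
  like \<open>n\<^sup>j\<^sup>D\<^sup>/\<^sup>N\<close> with \<open>jD/N > 1\<close>.\<close>

lemma not_powr_approximation:
  fixes Q :: "nat \<Rightarrow> real" and \<mu> :: real
  assumes I: "infinite I" and I1: "\<And>n. n \<in> I \<Longrightarrow> 1 \<le> n" and Q: "\<And>n. n \<in> I \<Longrightarrow> real n ^ D \<le> Q n"
    and N: "0 < N" "N < D" and \<mu>: "0 \<le> \<mu>" "j \<noteq> 0 \<Longrightarrow> 0 < \<mu>"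
    and approx: "\<And>\<epsilon>. 0 < \<epsilon> \<Longrightarrow> \<exists>M. \<forall>n\<in>I. M \<le> n \<longrightarrow>
       \<bar>real n - \<mu> * Q n powr (real j / real N)\<bar> \<le> \<epsilon> * Q n powr (real j / real N)"
  shows False
proof -
  have unbounded: "\<exists>n\<in>I. M \<le> n" for M using I unfolding infinite_nat_iff_unbounded_le by blast
  have Q1: "1 \<le> Q n" if "n \<in> I" for n
  proof -
    have "1 \<le> real n ^ D" using I1[OF that] by simp
    then show ?thesis using Q[OF that] by linarith
  qed
  show False
  proof (cases "j = 0")
    case True
    obtain M where M0: "\<forall>n\<in>I. M \<le> n \<longrightarrow> \<bar>real n - \<mu> * Q n powr 0\<bar> \<le> 1 * Q n powr 0"
      using approx[of 1] True by auto
    obtain n where n: "n \<in> I" "max M (nat \<lceil>\<mu>\<rceil> + 2) \<le> n" using unbounded by blast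
    then have "\<bar>real n - \<mu> * Q n powr 0\<bar> \<le> 1 * Q n powr 0" using M0 by simp
    moreover have "Q n powr 0 = 1" using Q1[OF n(1)] by simp
    moreover have "\<mu> + 2 \<le> real n" using n(2) by linarith
    ultimately show False by simp
  next
    case False
    define d where "d = real j / real N"
    define s where "s = d * real D - 1"
    have d: "0 \<le> d" unfolding d_def by simp
    have s: "0 < s"
    proof -
      have "real N < real j * real D" using N False by (metis of_nat_less_iff of_nat_mult le_less_trans
            less_imp_le_nat mult_le_mono1 mult.left_neutral not_gr0 Suc_leI One_nat_def linorder_not_less)
      then show ?thesis unfolding s_def d_def using N by (simp add: field_simps)
    qed
    obtain M where M: "\<forall>n\<in>I. M \<le> n \<longrightarrow> \<bar>real n - \<mu> * Q n powr d\<bar> \<le> \<mu> / 2 * Q n powr d"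
      using approx[of "\<mu> / 2"] \<mu>(2)[OF False] unfolding d_def by auto
    define W where "W = (2 / \<mu> + 1) powr (1 / s)"
    obtain n where n: "n \<in> I" "max M (nat \<lceil>W\<rceil>) \<le> n" using unbounded by blast
    have np: "0 < real n" using I1[OF n(1)] by simp
    have "\<bar>real n - \<mu> * Q n powr d\<bar> \<le> \<mu> / 2 * Q n powr d" using M n by simp
    moreover have "\<mu> * Q n powr d = 2 * (\<mu> / 2 * Q n powr d)" by simp
    ultimately have "\<mu> / 2 * Q n powr d \<le> real n" by linarith
    moreover have "(real n ^ D) powr d = real n * real n powr s"
      unfolding s_def by (rule power_powr_eq_mult_powr[OF np])
    moreover have "(real n ^ D) powr d \<le> Q n powr d" using Q[OF n(1)] d by (intro powr_mono2) auto
    ultimately have "\<mu> / 2 * (real n * real n powr s) \<le> real n"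
      using \<mu>(2)[OF False] by (metis order_trans mult_left_mono half_gt_zero less_imp_le)
    then have "real n powr s \<le> 2 / \<mu>" using np \<mu>(2)[OF False] by (simp add: field_simps)
    moreover have "2 / \<mu> + 1 \<le> real n powr s"
    proof -
      have "W \<le> real n" using n(2) by linarith
      then have "W powr s \<le> real n powr s" using s unfolding W_def by (intro powr_mono2) auto
      moreover have "W powr s = 2 / \<mu> + 1" unfolding W_def using s \<mu>(2)[OF False] by (simp add: powr_powr)
      ultimately show ?thesis by simp
    qed
    ultimately show False by simp
  qed
qed

lemma infinitely_often_same_index:
  fixes P :: "nat \<Rightarrow> nat \<Rightarrow> bool"
  assumes "\<And>n. 1 \<le> n \<Longrightarrow> \<exists>i<k. P n i"
  obtains i where "i < k" "infinite {n. 1 \<le> n \<and> P n i}"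
proof -
  have "{n::nat. 1 \<le> n} \<subseteq> (\<Union>i<k. {n. 1 \<le> n \<and> P n i})" using assms by auto
  moreover have "infinite {n::nat. 1 \<le> n}" using infinite_Ici[of "1::nat"] by (simp add: atLeast_def)
  ultimately have "infinite (\<Union>i<k. {n. 1 \<le> n \<and> P n i})" using finite_subset by blast
  then show ?thesis using that by auto
qed

lemma asymptotic_class_shape_approximation:
  assumes t: "tree_plan G lam" and AC: "asymptotic_class (in_lang G) (K_class G lam) N"
    and \<sigma>: "\<sigma> \<in> G" "infty_count lam 0 \<sigma> = 1"
  obtains j \<mu> I where "j \<le> N" "0 \<le> \<mu>" "j \<noteq> 0 \<Longrightarrow> 0 < \<mu>" "infinite I" "\<And>n. n \<in> I \<Longrightarrow> 1 \<le> n"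
    "\<And>\<epsilon>. 0 < \<epsilon> \<Longrightarrow> \<exists>M. \<forall>n\<in>I. M \<le> n \<longrightarrow>
       \<bar>real n - \<mu> * real (card (Gamma_set G lam {1..n})) powr (real j / real N)\<bar>
         \<le> \<epsilon> * real (card (Gamma_set G lam {1..n})) powr (real j / real N)"
proof -
  define \<phi> where "\<phi> = FP \<sigma> (Var 0)"
  define \<Gamma> where "\<Gamma> n = Gamma_struct G lam {1..n}" for n
  have "in_lang G \<phi> \<and> fv \<phi> \<subseteq> {..0}" using \<sigma> unfolding \<phi>_def by simp
  note table = AC[unfolded asymptotic_class_def, THEN conjunct2, rule_format, OF this]
  obtain T :: "(real \<times> real \<times> fm) list" where
    T1: "\<forall>(d, \<mu>, \<theta>)\<in>set T. (\<exists>j\<le>N. d = real j / real N) \<and> \<mu> \<ge> 0 \<and> (d \<noteq> 0 \<longrightarrow> \<mu> > 0)"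
    and T2: "\<forall>A\<in>K_class G lam. \<forall>b\<in>tuples A 0. \<exists>i<length T. holds_y A (snd (snd (T ! i))) b"
    and T3: "\<forall>i<length T. \<forall>\<epsilon>>0. \<exists>M::nat. \<forall>A\<in>K_class G lam. M \<le> card (carrier A) \<longrightarrow>
      (\<forall>b\<in>tuples A 0. holds_y A (snd (snd (T ! i))) b \<longrightarrow>
        \<bar>real (card (def_set A \<phi> b)) - fst (snd (T ! i)) * real (card (carrier A)) powr fst (T ! i)\<bar>
          \<le> \<epsilon> * real (card (carrier A)) powr fst (T ! i))"
    using table by (elim exE conjE) (rule that; blast)
  have K: "\<Gamma> n \<in> K_class G lam" if "1 \<le> n" for n unfolding \<Gamma>_def using Gamma_struct_in_K_class[OF t that] .
  have nil: "[] \<in> tuples (\<Gamma> n) 0" for n unfolding tuples_def by simp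
  obtain i0 where i0: "i0 < length T" and I: "infinite {n. 1 \<le> n \<and> holds_y (\<Gamma> n) (snd (snd (T ! i0))) []}"
    using infinitely_often_same_index[of "length T" "\<lambda>n i. holds_y (\<Gamma> n) (snd (snd (T ! i))) []"] T2 K nil
    by blast
  define I where "I = {n. 1 \<le> n \<and> holds_y (\<Gamma> n) (snd (snd (T ! i0))) []}"
  obtain d \<mu> \<theta> where dm: "T ! i0 = (d, \<mu>, \<theta>)" by (metis prod_cases3)
  then have "(d, \<mu>, \<theta>) \<in> set T" using nth_mem[OF i0] by simp
  then have "(\<exists>j\<le>N. d = real j / real N) \<and> 0 \<le> \<mu> \<and> (d \<noteq> 0 \<longrightarrow> 0 < \<mu>)"
    using bspec[OF T1, of "(d, \<mu>, \<theta>)"] by simp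
  then obtain j where j: "j \<le> N" "d = real j / real N" and \<mu>: "0 \<le> \<mu>" "d \<noteq> 0 \<Longrightarrow> 0 < \<mu>"
    by blast
  have card_def_set: "card (def_set (\<Gamma> n) \<phi> []) = n" for n
    using card_def_set_shape[OF t \<sigma>(1)] \<sigma>(2) unfolding \<Gamma>_def \<phi>_def by simp
  have "\<exists>M. \<forall>n\<in>I. M \<le> n \<longrightarrow>
      \<bar>real n - \<mu> * real (card (Gamma_set G lam {1..n})) powr (real j / real N)\<bar>
        \<le> \<epsilon> * real (card (Gamma_set G lam {1..n})) powr (real j / real N)" if "0 < \<epsilon>" for \<epsilon>
  proof -
    obtain M where M: "\<forall>A\<in>K_class G lam. M \<le> card (carrier A) \<longrightarrow>
      (\<forall>b\<in>tuples A 0. holds_y A (snd (snd (T ! i0))) b \<longrightarrow>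
        \<bar>real (card (def_set A \<phi> b)) - fst (snd (T ! i0)) * real (card (carrier A)) powr fst (T ! i0)\<bar>
          \<le> \<epsilon> * real (card (carrier A)) powr fst (T ! i0))"
      using T3 i0 \<open>0 < \<epsilon>\<close> by blast
    show ?thesis
    proof (intro exI[of _ M] ballI impI)
      fix n assume n: "n \<in> I" "M \<le> n"
      then have n1: "1 \<le> n" and h: "holds_y (\<Gamma> n) (snd (snd (T ! i0))) []" unfolding I_def by auto
      have "def_set (\<Gamma> n) \<phi> [] \<subseteq> carrier (\<Gamma> n)" unfolding def_set_def by auto
      moreover have "finite (carrier (\<Gamma> n))"
        using card_Gamma_set[OF t, of "{1..n}"] unfolding \<Gamma>_def Gamma_struct_simps by simp
      ultimately have "n \<le> card (carrier (\<Gamma> n))" using card_mono card_def_set[of n] by metis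
      then have "\<bar>real (card (def_set (\<Gamma> n) \<phi> [])) - \<mu> * real (card (carrier (\<Gamma> n))) powr d\<bar>
          \<le> \<epsilon> * real (card (carrier (\<Gamma> n))) powr d"
        using M K[OF n1] nil h dm n(2) by simp
      then show "\<bar>real n - \<mu> * real (card (Gamma_set G lam {1..n})) powr (real j / real N)\<bar>
          \<le> \<epsilon> * real (card (Gamma_set G lam {1..n})) powr (real j / real N)"
        using card_def_set[of n] unfolding \<Gamma>_def Gamma_struct_simps j(2) by simp
    qed
  qed
  moreover have "j \<noteq> 0 \<Longrightarrow> 0 < \<mu>" using \<mu>(2) j AC unfolding asymptotic_class_def by simp
  ultimately show ?thesis using that[OF j(1) \<mu>(1) _ I[folded I_def]] unfolding I_def by blast
qed

lemma not_asymptotic_class_below_plan_degree: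
  assumes t: "tree_plan G lam" and ex: "\<exists>\<sigma>\<in>G. lam \<sigma> = Infty" and N: "0 < N" "N < plan_degree G lam"
  shows "\<not> asymptotic_class (in_lang G) (K_class G lam) N"
proof
  assume AC: "asymptotic_class (in_lang G) (K_class G lam) N"
  obtain \<sigma> where \<sigma>: "\<sigma> \<in> G" "infty_count lam 0 \<sigma> = 1" using exists_infty_count_one[OF t ex] .
  show False
  proof (rule asymptotic_class_shape_approximation[OF t AC \<sigma>])
    fix j \<mu> I assume "j \<le> N" and \<mu>: "0 \<le> \<mu>" "j \<noteq> 0 \<Longrightarrow> 0 < \<mu>"
      and I: "infinite I" "\<And>n. n \<in> I \<Longrightarrow> 1 \<le> n"
      and approx: "\<And>\<epsilon>. 0 < \<epsilon> \<Longrightarrow> \<exists>M. \<forall>n\<in>I. M \<le> n \<longrightarrow>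
         \<bar>real n - \<mu> * real (card (Gamma_set G lam {1..n})) powr (real j / real N)\<bar>
           \<le> \<epsilon> * real (card (Gamma_set G lam {1..n})) powr (real j / real N)"
    have "real n ^ plan_degree G lam \<le> real (card (Gamma_set G lam {1..n}))" if "n \<in> I" for n
      using card_Gamma_set_bounds(1)[OF t I(2)[OF that]] by (metis of_nat_le_iff of_nat_power)
    then show False using not_powr_approximation[OF I _ N \<mu> approx] by blast
  qed
qed

theorem mainTheorem12:
  fixes G :: "nat list set" and lam :: "nat list \<Rightarrow> label"
  assumes "tree_plan G lam"
    and "\<exists>\<sigma>\<in>G. lam \<sigma> = Infty"
  shows "asymptotic_class (in_lang G) (K_class G lam) (degree (tpoly G lam)) \<and>
         (\<forall>n::nat. 0 < n \<and> n < degree (tpoly G lam) \<longrightarrow>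
            \<not> asymptotic_class (in_lang G) (K_class G lam) n)"
proof -
  have "degree (tpoly G lam) = plan_degree G lam" by (rule degree_tpoly[OF assms(1)])
  then show ?thesis
    using asymptotic_class_plan_degree[OF assms] not_asymptotic_class_below_plan_degree[OF assms] by auto
qed

end
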